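(* Let $q \equiv 5 \pmod 8$ be a prime power such that $q = s^2+4$ for some odd integer $s$. Then the eigenvalues of the adjacency matrix of the cyclotomic tournament $CT_q$ are $$\frac{q-1}{2},\qquad \frac{-1 \pm i\sqrt{q - 2\sqrt{q}}}{2},\qquad \frac{-1 \pm i\sqrt{q+2\sqrt{q}}}{2},$$ where $\frac{q-1}{2}$ has multiplicity $1$ and each of the other four eigenvalues has multiplicity $\frac{q-1}{4}$.
   Context: Cyclotomic tournament: let $q$ be a prime power with $q \equiv 5 \pmod 8$, let $g$ be a generator of $\mathbb{F}_q^*$, let $C_0^{(4)}$ be the subgroup of index $4$ in $\mathbb{F}_q^*$ and $C_i^{(4)} = g^i C_0^{(4)}$. Put $D = C_0^{(4)} \cup C_1^{(4)}$. The cyclotomic tournament $CT_q$ has vertex set $\mathbb{F}_q$ and an arc from $x$ to $y$ if and only if $x - y \in D$. Its adjacency matrix $A$ is the $q\times q$ $0/1$ matrix indexed by $\mathbb{F}_q$ with $A_{xy}=1$ iff there is an arc from $x$ to $y$. *)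

theory Defs
  imports "HOL-Analysis.Analysis" "HOL-Computational_Algebra.Polynomial"
begin

text \<open>Cyclotomic classes of order 4 in a finite field, relative to a generator g
  of the multiplicative group: C_i = g^i * C_0, where C_0 is the subgroup of
  index 4 (the nonzero fourth powers).\<close>
definition cyc_class :: "'a::{field,finite} \<Rightarrow> nat \<Rightarrow> 'a set" where
  "cyc_class g i = {g ^ i * x ^ 4 | x. x \<noteq> 0}"

definition cyc_D :: "'a::{field,finite} \<Rightarrow> 'a set" where
  "cyc_D g = cyc_class g 0 \<union> cyc_class g 1"

definition ct_adj :: "('a::{field,finite}) \<Rightarrow> complex ^('a::{field,finite}) ^('a::{field,finite})" where
  "ct_adj g = (\<chi> x y. if x - y \<in> cyc_D g then 1 else 0)"

definition charpoly :: "complex ^'n ^'n \<Rightarrow> complex poly" where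
  "charpoly A = det (\<chi> i j. (if i = j then [:0, 1:] else 0) - [:A $ i $ j:])"

end

theory Submission
  imports Defs "HOL-Number_Theory.Cong"
begin

text \<open>Write \<open>q = 4f + 1\<close> and let \<open>\<chi>\<close> be the quartic character with \<open>\<chi>(g) = \<i>\<close>. For a nontrivial
  additive character \<open>\<psi>\<close>, the vectors \<open>x \<mapsto> \<psi>(bx)\<close> are eigenvectors of the adjacency matrix
  with eigenvalue \<open>\<lambda>(b) = \<Sum>d\<in>D. \<psi>(-bd)\<close>, and \<open>\<lambda>(0) = |D| = (q - 1)/2\<close>. Expressing the indicator
  of \<open>D = C\<^sub>0 \<union> C\<^sub>1\<close> through \<open>\<chi>\<close> gives \<open>\<lambda>(b) = -1/2 + \<i> Im((1 - \<i>) cnj(\<chi>(-b)) G)/2\<close> for \<open>b \<noteq> 0\<close>,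
  where \<open>G = u + \<i>v\<close> is the quartic Gauss sum. Hence the other eigenvalues are
  \<open>-1/2 \<plusminus> \<i>(u - v)/2\<close> and \<open>-1/2 \<plusminus> \<i>(u + v)/2\<close>, each taken by the \<open>f\<close> indices \<open>b\<close> with a
  given value of \<open>\<chi>(-b)\<close>.

  As \<open>u\<^sup>2 + v\<^sup>2 = |G|\<^sup>2 = q\<close>, it remains to show \<open>uv = \<plusminus>sqrt q\<close>. From \<open>G\<^sup>2 = J G(\<chi>\<^sup>2)\<close>, where the
  Jacobi sum \<open>J = X + \<i>Y\<close> satisfies \<open>|J|\<^sup>2 = q\<close> and the quadratic Gauss sum \<open>G(\<chi>\<^sup>2) = \<plusminus>sqrt q\<close> is
  real, we get \<open>2uv = \<plusminus>Y sqrt q\<close>, so we need \<open>Y\<^sup>2 = 4\<close>. Now \<open>Y\<close> is even, and the characteristic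
  \<open>p\<close> does not divide both \<open>X\<close> and \<open>Y\<close>, since modulo \<open>p\<close> the sum \<open>J\<close> is congruent to
  \<open>\<Sum>t. (t(1 - t))^(3f) = (3f choose f)\<close>, which is nonzero by Lucas' theorem. For a
  representation \<open>X\<^sup>2 + Y\<^sup>2 = p^k = s\<^sup>2 + 4\<close> with \<open>s\<close> odd this forces \<open>Y\<^sup>2 = 4\<close>.\<close>

section \<open>Finite fields\<close>

lemma finite_field_power_card_minus_one:
  fixes x :: "'a::{field,finite}"
  assumes "x \<noteq> 0"
  shows "x ^ (CARD('a) - 1) = 1"
proof -
  have "(\<Prod>y\<in>UNIV-{0}. x * y) = x ^ (CARD('a) - 1) * \<Prod>(UNIV-{0::'a})"
    by (simp add: prod.distrib card_Diff_singleton)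
  also have "(\<Prod>y\<in>UNIV-{0}. x * y) = (\<Prod>y\<in>UNIV-{0::'a}. y)"
    by (rule prod.reindex_bij_witness[of _ "\<lambda>y. y / x" "\<lambda>y. x * y"]) (use assms in auto)
  finally have "1 * \<Prod>(UNIV-{0::'a}) = x ^ (CARD('a) - 1) * \<Prod>(UNIV-{0::'a})" by simp
  moreover have "\<Prod>(UNIV-{0::'a}) \<noteq> 0" by (subst prod_zero_iff) auto
  ultimately show ?thesis by (metis mult_cancel_right)
qed

lemma finite_field_power_card: "(x::'a::{field,finite}) ^ CARD('a) = x"
proof (cases "x = 0")
  case False
  have "CARD('a) = Suc (CARD('a) - 1)" using finite_UNIV_card_ge_0[where 'a='a] by simp
  then have "x ^ CARD('a) = x * x ^ (CARD('a) - 1)" by (metis power_Suc)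
  then show ?thesis using finite_field_power_card_minus_one[OF False] by simp
qed simp

lemma prime_CHAR_finite_field: "prime CHAR('a::{field,finite})"
  by (simp add: finite_imp_CHAR_pos prime_CHAR_semidom)

lemma CHAR_finite_field_ge_2: "CHAR('a::{field,finite}) \<ge> 2"
  using prime_CHAR_finite_field prime_ge_2_nat by blast

definition additive_subgroup :: "'a::ring_1 set \<Rightarrow> bool" where
  "additive_subgroup H \<longleftrightarrow> 0 \<in> H \<and> (\<forall>x\<in>H. \<forall>y\<in>H. x + y \<in> H) \<and> (\<forall>x\<in>H. -x \<in> H)"

lemma additive_subgroup_of_nat_mult:
  "additive_subgroup H \<Longrightarrow> x \<in> H \<Longrightarrow> of_nat n * x \<in> H"
  by (induction n) (auto simp: additive_subgroup_def distrib_right)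

lemma additive_subgroup_diff:
  "additive_subgroup H \<Longrightarrow> x \<in> H \<Longrightarrow> y \<in> H \<Longrightarrow> x - y \<in> H"
  unfolding additive_subgroup_def by (metis diff_conv_add_uminus)

lemma of_nat_mult_CHAR_minus_one:
  assumes "CHAR('a::ring_1) > 0"
  shows "of_nat (n * (CHAR('a) - 1)) = (- of_nat n :: 'a)"
proof -
  have "of_nat (n * (CHAR('a) - 1)) + of_nat n = (of_nat (n * CHAR('a)) :: 'a)"
    using assms by (simp flip: of_nat_add add: algebra_simps)
  also have "\<dots> = 0" by simp
  finally show ?thesis by (simp add: eq_neg_iff_add_eq_0)
qed

lemma additive_subgroup_insert:
  fixes H :: "'a::{field,finite} set"
  assumes "additive_subgroup H"
  shows "additive_subgroup {h + of_nat c * v | h c. h \<in> H}"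
  using assms unfolding additive_subgroup_def
proof (intro conjI ballI; elim conjE CollectE exE)
  show "0 \<in> {h + of_nat c * v |h c. h \<in> H}" if "0 \<in> H"
    using that by (auto intro!: exI[of _ 0])
  show "x + y \<in> {h + of_nat c * v |h c. h \<in> H}"
    if "\<forall>x\<in>H. \<forall>y\<in>H. x + y \<in> H" "x = h1 + of_nat c1 * v" "h1 \<in> H" "y = h2 + of_nat c2 * v" "h2 \<in> H"
    for x y h1 h2 c1 c2
    using that by (auto simp: algebra_simps intro!: exI[of _ "h1 + h2"] exI[of _ "c1 + c2"])
  show "- x \<in> {h + of_nat c * v |h c. h \<in> H}"
    if "\<forall>x\<in>H. - x \<in> H" "x = h + of_nat c * v" "h \<in> H" for x h c
    using that of_nat_mult_CHAR_minus_one[of c, where 'a='a] CHAR_finite_field_ge_2[where 'a='a]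
    by (auto intro!: exI[of _ "- h"] exI[of _ "c * (CHAR('a) - 1)"])
qed

lemma additive_subgroup_of_nat_mult_imp_mem:
  fixes H :: "'a::{field,finite} set"
  assumes H: "additive_subgroup H" and nv: "of_nat n * v \<in> H" and n: "0 < n" "n < CHAR('a)"
  shows "v \<in> H"
proof -
  have "coprime n CHAR('a)"
    using n prime_CHAR_finite_field[where 'a='a]
    by (metis coprime_commute dvd_imp_le not_le prime_imp_coprime)
  then obtain e where "[n * e = Suc 0] (mod CHAR('a))"
    using cong_solve_coprime_nat by blast
  then have "(of_nat (n * e) :: 'a) = 1"
    by (metis of_nat_1 One_nat_def of_nat_eq_iff_cong_CHAR)
  then have "v = of_nat e * (of_nat n * v)"
    by (simp add: mult.assoc[symmetric] mult.commute[of e] flip: of_nat_mult)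
  then show ?thesis using additive_subgroup_of_nat_mult[OF H nv] by metis
qed

lemma card_additive_subgroup_insert:
  fixes H :: "'a::{field,finite} set"
  assumes H: "additive_subgroup H" and v: "v \<notin> H"
  shows "card {h + of_nat c * v | h c. h \<in> H} = card H * CHAR('a)"
proof -
  let ?p = "CHAR('a)" and ?F = "\<lambda>(h, c). h + of_nat c * v"
  have p: "?p > 0" using CHAR_finite_field_ge_2[where 'a='a] by simp
  have "{h + of_nat c * v | h c. h \<in> H} = ?F ` (H \<times> {..<?p})"
  proof (intro equalityI subsetI)
    fix x assume "x \<in> {h + of_nat c * v | h c. h \<in> H}"
    then obtain h c where "x = h + of_nat c * v" "h \<in> H" by auto
    moreover have "(of_nat c :: 'a) = of_nat (c mod ?p)"
      by (simp add: of_nat_eq_iff_cong_CHAR cong_def)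
    ultimately show "x \<in> ?F ` (H \<times> {..<?p})"
      using p by (auto intro!: image_eqI[of _ _ "(h, c mod ?p)"])
  qed auto
  moreover have "inj_on ?F (H \<times> {..<?p})"
  proof (rule inj_onI, clarsimp)
    have collision: "False" if "a < b" "b < ?p" "ha \<in> H" "hb \<in> H"
      and eq: "ha + of_nat a * v = hb + of_nat b * v" for a b ha hb
    proof -
      have "of_nat (b - a) * v = ha - hb"
        using eq \<open>a < b\<close> by (simp add: of_nat_diff algebra_simps)
      then have "of_nat (b - a) * v \<in> H" using additive_subgroup_diff[OF H that(3,4)] by simp
      then show False
        using additive_subgroup_of_nat_mult_imp_mem[OF H, of "b - a" v] v that(1,2) by linarith
    qed
    fix h1 c1 h2 c2
    assume "h1 \<in> H" "h2 \<in> H" "c1 < ?p" "c2 < ?p" "h1 + of_nat c1 * v = h2 + of_nat c2 * v"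
    then show "h1 = h2 \<and> c1 = c2"
      using collision[of c1 c2 h1 h2] collision[of c2 c1 h2 h1] by (cases c1 c2 rule: linorder_cases) auto
  qed
  ultimately show ?thesis by (simp add: card_image card_cartesian_product)
qed

lemma card_finite_field_CHAR_power: "\<exists>k. CARD('a::{field,finite}) = CHAR('a) ^ k"
proof -
  let ?p = "CHAR('a)"
  have "\<exists>H::'a set. \<exists>k. additive_subgroup H \<and> card H = ?p ^ k \<and> (n \<le> card H \<or> H = UNIV)" for n
  proof (induction n)
    case 0
    show ?case by (intro exI[of _ "{0}"] exI[of _ 0]) (auto simp: additive_subgroup_def)
  next
    case (Suc n)
    then obtain H :: "'a set" and k
      where H: "additive_subgroup H" "card H = ?p ^ k" "n \<le> card H \<or> H = UNIV" by blast
    show ?case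
    proof (cases "H = UNIV")
      case False
      then obtain v where v: "v \<notin> H" by blast
      let ?H' = "{h + of_nat c * v | h c. h \<in> H}"
      have "card ?H' = ?p ^ Suc k"
        using card_additive_subgroup_insert[OF H(1) v] H(2) by simp
      moreover have "card H < card ?H'"
        using card_additive_subgroup_insert[OF H(1) v] CHAR_finite_field_ge_2[where 'a='a] H(1)
        by (auto simp: additive_subgroup_def card_gt_0_iff)
      ultimately show ?thesis
        using additive_subgroup_insert[OF H(1)] H(3) False by (intro exI[of _ ?H'] exI[of _ "Suc k"]) auto
    qed (use H in blast)
  qed
  then obtain H :: "'a set" and k where H: "card H = ?p ^ k" "Suc CARD('a) \<le> card H \<or> H = UNIV"
    by blast
  have "card H \<le> CARD('a)" by (simp add: card_mono)
  then show ?thesis using H by auto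
qed

lemma of_nat_CARD_finite_field: "(of_nat CARD('a) :: 'a::{field,finite}) = 0"
proof -
  obtain k where k: "CARD('a) = CHAR('a) ^ k" using card_finite_field_CHAR_power by blast
  have "card {0, 1::'a} \<le> CARD('a)" by (rule card_mono) auto
  then have "k \<noteq> 0" using k by (cases k) auto
  then show ?thesis using k by (simp add: of_nat_eq_0_iff_char_dvd dvd_power)
qed

lemma frobenius_fixed_imp_of_nat:
  fixes y :: "'a::{field,finite}"
  assumes "y ^ CHAR('a) = y"
  shows "\<exists>n < CHAR('a). y = of_nat n"
proof -
  let ?p = "CHAR('a)"
  have p2: "?p \<ge> 2" by (rule CHAR_finite_field_ge_2)
  have of_nat_fixed: "(of_nat n :: 'a) ^ ?p = of_nat n" for n
  proof (induction n)
    case (Suc n)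
    have "(of_nat n + 1 :: 'a) ^ ?p = of_nat n ^ ?p + 1 ^ ?p"
      by (rule freshmans_dream[OF prime_CHAR_finite_field refl])
    then show ?case using Suc by (simp add: add.commute)
  qed (use p2 in simp)
  define Q :: "'a poly" where "Q = monom 1 ?p - [:0, 1:]"
  have "coeff Q ?p = 1" using p2 by (simp add: Q_def coeff_pCons split: nat.split)
  then have "Q \<noteq> 0" by auto
  moreover have "degree Q \<le> ?p"
    unfolding Q_def by (rule order.trans[OF degree_diff_le_max]) (use p2 in \<open>auto simp: degree_monom_le\<close>)
  ultimately have "card {x. poly Q x = 0} \<le> ?p"
    using card_poly_roots_bound[of Q] by simp
  moreover have roots: "poly Q x = 0 \<longleftrightarrow> x ^ ?p = x" for x by (simp add: Q_def poly_monom)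
  moreover have "card (of_nat ` {..<?p} :: 'a set) = ?p"
    by (subst card_image) (auto simp: inj_on_def of_nat_eq_iff_cong_CHAR cong_def)
  moreover have sub: "of_nat ` {..<?p} \<subseteq> {x::'a. poly Q x = 0}"
    using of_nat_fixed roots by auto
  ultimately have "of_nat ` {..<?p} = {x::'a. poly Q x = 0}"
    using card_mono[OF _ sub] by (intro card_subset_eq) auto
  then show ?thesis using assms roots by blast
qed

definition frobenius_trace :: "nat \<Rightarrow> 'a::comm_ring_1 \<Rightarrow> 'a" where
  "frobenius_trace k x = (\<Sum>j<k. x ^ (CHAR('a) ^ j))"

lemma frobenius_trace_add:
  assumes "prime CHAR('a::comm_ring_1)"
  shows "frobenius_trace k (x + y :: 'a) = frobenius_trace k x + frobenius_trace k y"
  unfolding frobenius_trace_def by (simp add: freshmans_dream'[OF assms refl] sum.distrib)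

lemma frobenius_trace_power_CHAR:
  fixes x :: "'a::{field,finite}"
  assumes k: "CARD('a) = CHAR('a) ^ k"
  shows "frobenius_trace k x ^ CHAR('a) = frobenius_trace k x"
proof -
  let ?p = "CHAR('a)"
  have "frobenius_trace k x ^ ?p = (\<Sum>j<k. x ^ (?p ^ Suc j))"
    unfolding frobenius_trace_def freshmans_dream_sum[OF prime_CHAR_finite_field refl]
    by (simp add: power_mult[symmetric] mult.commute)
  also have "\<dots> = (\<Sum>j<Suc k. x ^ (?p ^ j)) - x ^ (?p ^ 0)"
    by (subst sum.lessThan_Suc_shift) simp
  also have "\<dots> = frobenius_trace k x"
    using finite_field_power_card[of x] k by (simp add: frobenius_trace_def)
  finally show ?thesis .
qed

lemma frobenius_trace_nonzero:
  assumes k: "CARD('a::{field,finite}) = CHAR('a) ^ k"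
  shows "\<exists>c::'a. frobenius_trace k c \<noteq> 0"
proof (rule ccontr)
  let ?p = "CHAR('a)"
  assume "\<not> (\<exists>c::'a. frobenius_trace k c \<noteq> 0)"
  then have roots: "{x::'a. poly (\<Sum>j<k. monom 1 (?p ^ j)) x = 0} = UNIV"
    by (simp add: frobenius_trace_def poly_sum poly_monom)
  have p2: "?p \<ge> 2" by (rule CHAR_finite_field_ge_2)
  have "card {0, 1::'a} \<le> CARD('a)" by (rule card_mono) auto
  then have k1: "k \<ge> 1" using k by (cases k) auto
  have coeff: "coeff (\<Sum>j<k. monom (1::'a) (?p ^ j)) n = (\<Sum>j<k. if ?p ^ j = n then 1 else 0)" for n
    by (simp add: coeff_sum)
  have "(\<Sum>j<k. if ?p ^ j = 1 then (1::'a) else 0) = (\<Sum>j<k. if j = 0 then 1 else 0)"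
    by (rule sum.cong[OF refl]) (use p2 in auto)
  then have "coeff (\<Sum>j<k. monom (1::'a) (?p ^ j)) 1 = 1" using k1 coeff by simp
  then have nz: "(\<Sum>j<k. monom (1::'a) (?p ^ j)) \<noteq> 0" by auto
  have "degree (\<Sum>j<k. monom (1::'a) (?p ^ j)) \<le> ?p ^ (k - 1)"
  proof (rule degree_le, intro allI impI)
    fix n assume n: "?p ^ (k - 1) < n"
    have "?p ^ j < n" if "j < k" for j
    proof -
      have "?p ^ j \<le> ?p ^ (k - 1)" using that p2 by (intro power_increasing) auto
      then show ?thesis using n by linarith
    qed
    then show "coeff (\<Sum>j<k. monom (1::'a) (?p ^ j)) n = 0"
      unfolding coeff by (intro sum.neutral) auto
  qed
  then have "CARD('a) \<le> ?p ^ (k - 1)" using card_poly_roots_bound[OF nz] roots by simp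
  moreover have "?p ^ (k - 1) < ?p ^ k" using p2 k1 by (intro power_strict_increasing) auto
  ultimately show False using k by simp
qed

locale additive_character =
  fixes psi :: "'a::{field,finite} \<Rightarrow> complex"
  assumes psi_add: "psi (x + y) = psi x * psi y"
    and cnj_psi_mult_psi: "cnj (psi x) * psi x = 1"
    and psi_nontrivial: "\<exists>c. psi c \<noteq> 1"

lemma exists_additive_character: "\<exists>psi::'a::{field,finite} \<Rightarrow> complex. additive_character psi"
proof -
  let ?p = "CHAR('a)"
  obtain k where k: "CARD('a) = ?p ^ k" using card_finite_field_CHAR_power by blast
  obtain c :: 'a where c: "frobenius_trace k c \<noteq> 0" using frobenius_trace_nonzero[OF k] by blast
  define tr where "tr x = (SOME n. n < ?p \<and> frobenius_trace k x = of_nat n)" for x :: 'a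
  have tr: "tr x < ?p \<and> frobenius_trace k x = of_nat (tr x)" for x
    unfolding tr_def
    by (rule someI_ex) (use frobenius_fixed_imp_of_nat frobenius_trace_power_CHAR[OF k] in blast)
  have p: "1 \<le> ?p" using CHAR_finite_field_ge_2[where 'a='a] by simp
  define psi where "psi x = exp (2 * of_real pi * \<i> * of_nat (tr x) / of_nat ?p)" for x
  have "psi (x + y) = psi x * psi y" for x y
  proof -
    have "(of_nat (tr (x + y)) :: 'a) = of_nat (tr x + tr y)"
      using tr frobenius_trace_add[OF prime_CHAR_finite_field] by (metis of_nat_add)
    then have "tr (x + y) mod ?p = (tr x + tr y) mod ?p"
      by (simp only: of_nat_eq_iff_cong_CHAR cong_def)
    then have "psi (x + y) = exp (2 * of_real pi * \<i> * of_nat (tr x + tr y) / of_nat ?p)"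
      unfolding psi_def using complex_root_unity_eq[OF p] by blast
    then show ?thesis by (simp add: psi_def add_divide_distrib distrib_left flip: exp_add)
  qed
  moreover have "cnj (psi x) * psi x = 1" for x
    by (simp add: psi_def exp_cnj flip: exp_add)
  moreover have "psi c \<noteq> 1"
    using complex_root_unity_eq_1[OF p, of "tr c"] tr[of c] c by (auto simp: psi_def dest: dvd_imp_le)
  ultimately show ?thesis unfolding additive_character_def by blast
qed

section \<open>Character sums over a finite field\<close>

lemma sum_UNIV_translate:
  fixes h :: "'a::{ab_group_add,finite} \<Rightarrow> 'b::comm_monoid_add"
  shows "(\<Sum>x\<in>UNIV. h (x + c)) = (\<Sum>x\<in>UNIV. h x)"
  by (rule sum.reindex_bij_witness[of _ "\<lambda>x. x - c" "\<lambda>x. x + c"]) auto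

lemma sum_UNIV_reflect:
  fixes h :: "'a::{ab_group_add,finite} \<Rightarrow> 'b::comm_monoid_add"
  shows "(\<Sum>y\<in>UNIV. h (x - y)) = (\<Sum>y\<in>UNIV. h y)"
  by (rule sum.reindex_bij_witness[of _ "\<lambda>y. x - y" "\<lambda>y. x - y"]) auto

lemma sum_UNIV_uminus:
  fixes h :: "'a::{ab_group_add,finite} \<Rightarrow> 'b::comm_monoid_add"
  shows "(\<Sum>x\<in>UNIV. h (- x)) = (\<Sum>x\<in>UNIV. h x)"
  using sum_UNIV_reflect[of h 0] by simp

lemma sum_UNIV_scale:
  fixes h :: "'a::{field,finite} \<Rightarrow> 'b::comm_monoid_add"
  assumes "c \<noteq> 0"
  shows "(\<Sum>x\<in>UNIV. h (c * x)) = (\<Sum>x\<in>UNIV. h x)"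
  by (rule sum.reindex_bij_witness[of _ "\<lambda>x. x / c" "\<lambda>x. c * x"]) (use assms in auto)

context additive_character
begin

lemma psi_nonzero: "psi x \<noteq> 0"
  using cnj_psi_mult_psi[of x] by auto

lemma psi_0: "psi 0 = 1"
  using psi_add[of 0 0] psi_nonzero[of 0] by (metis add_0 mult_cancel_left1)

lemma psi_uminus: "psi (- x) = cnj (psi x)"
  using psi_add[of "- x" x] psi_0 cnj_psi_mult_psi[of x] psi_nonzero[of x]
  by (metis add.left_inverse mult_cancel_right)

lemma psi_diff: "psi (x - y) = psi x * cnj (psi y)"
  by (simp only: diff_conv_add_uminus psi_add psi_uminus)

lemma sum_psi: "(\<Sum>x\<in>UNIV. psi x) = 0"
proof -
  obtain c where c: "psi c \<noteq> 1" using psi_nontrivial by blast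
  have "(\<Sum>x\<in>UNIV. psi x) = (\<Sum>x\<in>UNIV. psi (x + c))"
    by (rule sum_UNIV_translate[symmetric])
  also have "\<dots> = psi c * (\<Sum>x\<in>UNIV. psi x)" by (simp add: psi_add sum_distrib_left mult_ac)
  finally have "(1 - psi c) * (\<Sum>x\<in>UNIV. psi x) = 0" by (simp add: algebra_simps)
  then show ?thesis using c by simp
qed

lemma sum_psi_mult: "(\<Sum>x\<in>UNIV. psi (b * x)) = (if b = 0 then of_nat CARD('a) else 0)"
  using sum_UNIV_scale[of b psi] by (simp add: sum_psi psi_0)

lemma sum_nonzero_psi_mult:
  "(\<Sum>x\<in>UNIV-{0}. psi (b * x)) = (if b = 0 then of_nat CARD('a) - 1 else -1)"
proof -
  have "(\<Sum>x\<in>UNIV. psi (b * x)) = 1 + (\<Sum>x\<in>UNIV-{0}. psi (b * x))"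
    by (subst sum.remove[of _ 0]) (auto simp: psi_0)
  then show ?thesis using sum_psi_mult[of b] by (auto simp: eq_neg_iff_add_eq_0 add.commute)
qed

lemma gauss_sum_norm:
  fixes c :: "'a \<Rightarrow> complex"
  assumes c_mult: "\<And>x y. c (x * y) = c x * c y" and c_0: "c 0 = 0"
    and c_unit: "\<And>x. x \<noteq> 0 \<Longrightarrow> cnj (c x) * c x = 1"
    and sum_c: "(\<Sum>x\<in>UNIV. c x) = 0"
  shows "cnj (\<Sum>x\<in>UNIV. c x * psi x) * (\<Sum>x\<in>UNIV. c x * psi x) = of_nat CARD('a)"
proof -
  have c_1: "c 1 = 1" using c_mult[of 1 1] c_unit[of 1] by (metis mult_1 mult_cancel_right2 zero_neq_one)
  have "cnj (\<Sum>x\<in>UNIV. c x * psi x) * (\<Sum>x\<in>UNIV. c x * psi x)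
      = (\<Sum>y\<in>UNIV. \<Sum>x\<in>UNIV. cnj (c y) * c x * psi (x - y))"
    unfolding cnj_sum sum_product
    by (intro sum.cong refl) (simp add: psi_diff)
  also have "\<dots> = (\<Sum>y\<in>UNIV-{0}. \<Sum>x\<in>UNIV. cnj (c y) * c x * psi (x - y))"
    by (rule sum.mono_neutral_right) (auto simp: c_0)
  also have "\<dots> = (\<Sum>y\<in>UNIV-{0}. \<Sum>t\<in>UNIV. c t * psi ((t - 1) * y))"
  proof (rule sum.cong[OF refl])
    fix y :: 'a assume "y \<in> UNIV - {0}"
    then have y: "y \<noteq> 0" by simp
    have "(\<Sum>x\<in>UNIV. cnj (c y) * c x * psi (x - y)) = (\<Sum>t\<in>UNIV. cnj (c y) * c (y * t) * psi (y * t - y))"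
      by (rule sum_UNIV_scale[OF y, symmetric])
    also have "\<dots> = (\<Sum>t\<in>UNIV. c t * psi ((t - 1) * y))"
      using c_unit[OF y] by (intro sum.cong) (auto simp: c_mult algebra_simps)
    finally show "(\<Sum>x\<in>UNIV. cnj (c y) * c x * psi (x - y)) = (\<Sum>t\<in>UNIV. c t * psi ((t - 1) * y))" .
  qed
  also have "\<dots> = (\<Sum>t\<in>UNIV. c t * (\<Sum>y\<in>UNIV-{0}. psi ((t - 1) * y)))"
    by (subst sum.swap) (simp add: sum_distrib_left)
  also have "\<dots> = (\<Sum>t\<in>UNIV. (if t = 1 then c t * of_nat CARD('a) else 0) - c t)"
    by (intro sum.cong refl) (use sum_nonzero_psi_mult[of "_ - 1"] in \<open>simp add: algebra_simps\<close>)
  also have "\<dots> = of_nat CARD('a)"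
    by (simp add: sum_subtractf sum_c c_1)
  finally show ?thesis .
qed

lemma det_character_matrix_nonzero: "det (\<chi> i j. [:psi (j * i):]) \<noteq> 0"
proof -
  define P where "P = (\<chi> i j. [:psi (j * i):])"
  define P' where "P' = (\<chi> i j. [:psi (- (i * j)):])"
  have "(P ** P') $ x $ z = (if x = z then [:of_nat CARD('a):] else 0)" for x z
  proof -
    have "(P ** P') $ x $ z = (\<Sum>b\<in>UNIV. [:psi (b * x):] * [:psi (- (b * z)):])"
      by (simp only: P_def P'_def matrix_matrix_mult_def vec_lambda_beta)
    also have "\<dots> = (\<Sum>b\<in>UNIV. [:psi ((x - z) * b):])"
      by (rule sum.cong[OF refl]) (simp add: algebra_simps psi_diff psi_uminus)
    finally show ?thesis by (simp add: sum_to_poly sum_psi_mult)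
  qed
  then have "det (P ** P') = (\<Prod>i\<in>(UNIV::'a set). [:of_nat CARD('a):])"
    by (subst det_diagonal) (auto simp: vec_eq_iff)
  then show ?thesis by (auto simp: det_mul P_def)
qed

end

section \<open>Binomial coefficients modulo a prime\<close>

lemma prime_not_dvd_choose:
  assumes "prime p" "n < p" "k \<le> n"
  shows "\<not> p dvd (n choose k)"
proof -
  have "fact n = fact k * fact (n - k) * (n choose k)"
    using binomial_fact_lemma[OF assms(3)] by simp
  then show ?thesis using prime_dvd_fact_iff[OF assms(1)] assms(2)
    by (metis dvd_mult not_le)
qed

lemma coeff_one_plus_X_power:
  "coeff ([:1, 1:] ^ r :: 'a::comm_semiring_1 poly) j = of_nat (r choose j)"
proof (cases "j \<le> r")
  case False
  have "degree ([:1, 1:] ^ r :: 'a poly) \<le> r"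
    by (rule order.trans[OF degree_power_le]) simp
  then show ?thesis using False by (simp add: coeff_eq_0 binomial_eq_0)
qed (simp add: coeff_linear_poly_power)

lemma one_plus_X_power_CHAR:
  assumes "prime CHAR('a::comm_ring_1)"
  shows "([:1, 1:] :: 'a poly) ^ CHAR('a) = 1 + monom 1 CHAR('a)"
proof -
  have "([:1, 1:] :: 'a poly) = monom 1 0 + monom 1 1" by (simp add: monom_0 monom_Suc)
  then have "([:1, 1:] :: 'a poly) ^ CHAR('a) = monom 1 0 ^ CHAR('a) + monom 1 1 ^ CHAR('a)"
    using freshmans_dream[where 'a="'a poly"] assms by simp
  also have "\<dots> = monom 1 0 + monom 1 CHAR('a)" by (simp add: monom_power)
  finally show ?thesis by (simp add: monom_0 one_pCons)
qed

text \<open>One step of Lucas' theorem: the last base-\<open>p\<close> digits split off.\<close>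

lemma lucas_of_nat_choose:
  assumes p: "prime CHAR('a::comm_ring_1)" and r: "r < CHAR('a)" and s: "s < CHAR('a)"
  shows "(of_nat ((CHAR('a) * m + r) choose (CHAR('a) * a + s)) :: 'a) =
         of_nat (m choose a) * of_nat (r choose s)"
proof -
  let ?p = "CHAR('a)" and ?X = "[:1, 1:] :: 'a poly"
  have "?X ^ (?p * m + r) = (1 + monom 1 ?p) ^ m * ?X ^ r"
    by (simp add: power_add power_mult one_plus_X_power_CHAR[OF p])
  also have "(1 + monom 1 ?p) ^ m = (\<Sum>i\<le>m. monom (of_nat (m choose i)) (?p * i))"
    by (subst add.commute, subst binomial_ring)
       (simp add: monom_power of_nat_monom mult_monom mult.commute)
  finally have "coeff (?X ^ (?p * m + r)) (?p * a + s)
      = (\<Sum>i\<le>m. if ?p * a + s < ?p * i then 0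
          else of_nat (m choose i) * coeff (?X ^ r) (?p * a + s - ?p * i))"
    by (simp add: sum_distrib_right coeff_sum coeff_monom_mult)
  also have "\<dots> = (\<Sum>i\<le>m. if ?p * a + s < ?p * i then 0
          else of_nat (m choose i) * of_nat (r choose (?p * a + s - ?p * i)))"
    by (simp only: coeff_one_plus_X_power)
  also have "\<dots> = (\<Sum>i\<le>m. if i = a then of_nat (m choose a) * of_nat (r choose s) else 0)"
  proof (rule sum.cong[OF refl])
    fix i
    have "r < ?p * a + s - ?p * i" if "i < a"
    proof -
      have "?p * i + ?p \<le> ?p * a" using that by (metis Suc_leI mult_Suc_right mult_le_mono2 add.commute)
      then show ?thesis using r by linarith
    qed
    moreover have "?p * a + s < ?p * i" if "a < i"
    proof -
      have "?p * (a + 1) \<le> ?p * i" using that by (intro mult_le_mono2) linarith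
      then show ?thesis using s by (simp add: algebra_simps)
    qed
    ultimately show "(if ?p * a + s < ?p * i then 0
        else of_nat (m choose i) * of_nat (r choose (?p * a + s - ?p * i))) =
      (if i = a then of_nat (m choose a) * of_nat (r choose s) else (0::'a))"
      by (cases i a rule: linorder_cases) (auto simp: binomial_eq_0)
  qed
  also have "\<dots> = of_nat (m choose a) * of_nat (r choose s)"
    by (cases "a \<le> m") (simp_all add: sum.delta binomial_eq_0)
  finally show ?thesis by (simp add: coeff_one_plus_X_power)
qed

text \<open>For \<open>q = p^k\<close> with \<open>p \<equiv> 1 (mod 4)\<close> and \<open>f = (q - 1)/4\<close>, every base-\<open>p\<close> digit of
  \<open>3f\<close> is three times the corresponding digit of \<open>f\<close> and thus still below \<open>p\<close>.\<close>

lemma of_nat_choose_three_quarter_nonzero: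
  assumes p: "prime CHAR('a::field)" and p4: "CHAR('a) mod 4 = 1"
  shows "(of_nat ((3 * ((CHAR('a) ^ k - 1) div 4)) choose ((CHAR('a) ^ k - 1) div 4)) :: 'a) \<noteq> 0"
proof (induction k)
  case (Suc k)
  let ?p = "CHAR('a)"
  define e where "e = (?p - 1) div 4"
  define F where "F = (?p ^ k - 1) div 4"
  have p1: "?p \<ge> 1" using p prime_ge_1_nat by blast
  have pe: "?p = 4 * e + 1" using p4 p1 unfolding e_def by presburger
  have "?p ^ k mod 4 = 1" using p4 by (metis power_mod power_one mod_mod_trivial)
  moreover have "?p ^ k \<ge> 1" using p1 by simp
  ultimately have "?p ^ k = 4 * F + 1" unfolding F_def by presburger
  then have "?p ^ Suc k = 4 * (?p * F + e) + 1" using pe by (simp add: algebra_simps)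
  then have FS: "(?p ^ Suc k - 1) div 4 = ?p * F + e" by simp
  have "(of_nat ((?p * (3 * F) + 3 * e) choose (?p * F + e)) :: 'a) =
        of_nat ((3 * F) choose F) * of_nat ((3 * e) choose e)"
    by (rule lucas_of_nat_choose[OF p]) (use pe in auto)
  moreover have "(of_nat ((3 * F) choose F) :: 'a) \<noteq> 0" using Suc F_def by simp
  moreover have "(of_nat ((3 * e) choose e) :: 'a) \<noteq> 0"
    using prime_not_dvd_choose[OF p, of "3 * e" e] pe by (simp add: of_nat_eq_0_iff_char_dvd)
  moreover have "3 * (?p * F + e) = ?p * (3 * F) + 3 * e" by simp
  ultimately show ?case by (metis FS mult_eq_0_iff)
qed simp

section \<open>Congruences and sums of two squares\<close>

lemma odd_power_mod_8_eq_5_imp_mod_4: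
  assumes "odd (p::nat)" "p ^ k mod 8 = 5"
  shows "p mod 4 = 1"
proof -
  have "p mod 8 = 1 \<or> p mod 8 = 3 \<or> p mod 8 = 5 \<or> p mod 8 = 7" using assms(1) by presburger
  then have "(p mod 8) ^ 2 mod 8 = 1" by auto
  then have "p ^ 2 mod 8 = 1" by (simp add: power_mod)
  then have sq: "(p ^ 2) ^ j mod 8 = 1" for j by (subst power_mod[symmetric]) simp
  show ?thesis
  proof (cases "even k")
    case True
    then show ?thesis using assms(2) sq[of "k div 2"] by (simp add: power_mult[symmetric])
  next
    case False
    then have "k = Suc (2 * (k div 2))" by simp
    then have "p ^ k = p * (p ^ 2) ^ (k div 2)" by (metis power_Suc power_mult)
    then have "p ^ k mod 8 = (p mod 8) * ((p ^ 2) ^ (k div 2) mod 8) mod 8" by (metis mod_mult_eq)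
    then have "p mod 8 = 5" using assms(2) sq[of "k div 2"] by simp
    then show ?thesis by presburger
  qed
qed

text \<open>The identity \<open>(Xs + 2eY)\<^sup>2 + (2X - esY)\<^sup>2 = (X\<^sup>2 + Y\<^sup>2)(s\<^sup>2 + 4)\<close> bounds the quotient
  \<open>m = (Xs + 2eY)/(s\<^sup>2 + 4)\<close> by \<open>m\<^sup>2 \<le> 1\<close>; \<open>m = 0\<close> contradicts the parities.\<close>

lemma sum_two_squares_dvd_imp_square_eq_4:
  fixes X Y s e :: int
  assumes e: "e * e = 1" and XY: "X^2 + Y^2 = s^2 + 4"
    and dvd: "s^2 + 4 dvd X * s + 2 * e * Y" and "even Y" "odd s"
  shows "Y^2 = 4"
proof -
  let ?Q = "s^2 + 4"
  have Q: "?Q > 0" using zero_le_power2[of s] by linarith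
  have e2: "e^2 = 1" using e by (simp add: power2_eq_square)
  obtain m where m: "X * s + 2 * e * Y = ?Q * m" using dvd by blast
  have "(X * s + 2 * e * Y)^2 + (2 * X - e * s * Y)^2
      = (X^2 + Y^2) * ?Q + (e * e - 1) * (4 * Y^2 + s^2 * Y^2)"
    by (simp add: power2_eq_square algebra_simps)
  then have "(?Q * m)^2 + (2 * X - e * s * Y)^2 = ?Q^2"
    unfolding m XY by (simp add: e power2_eq_square)
  then have id: "?Q^2 * m^2 + (2 * X - e * s * Y)^2 = ?Q^2"
    by (simp only: power_mult_distrib)
  moreover have "(2 * X - e * s * Y)^2 \<ge> 0" by simp
  ultimately have "?Q^2 * m^2 \<le> ?Q^2 * 1" by linarith
  then have "m^2 \<le> 1" using Q by (simp add: mult_le_cancel_left_pos)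
  then have "\<bar>m\<bar> \<le> 1" by (simp add: abs_square_le_1)
  then consider "m = 0" | "m = 1 \<or> m = -1" by linarith
  then show ?thesis
  proof cases
    case 1
    then have "X * s = - (2 * e * Y)" using m by simp
    then have "(X * s)^2 = (2 * e * Y)^2" by simp
    then have "X^2 * s^2 = 4 * Y^2" using e2 by (simp add: power_mult_distrib)
    then have "X^2 * ?Q = 4 * ?Q" using XY by (simp add: algebra_simps)
    then have "X^2 = 4" using mult_right_cancel[of ?Q "X^2" 4] Q by simp
    then have "Y^2 = s^2" using XY by simp
    then show ?thesis using \<open>even Y\<close> \<open>odd s\<close> by (metis even_power zero_less_numeral)
  next
    case 2
    then have "m^2 = 1" by auto
    then have "2 * X = e * s * Y" using id by simp
    then have "(2 * X)^2 = (e * s * Y)^2" by simp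
    then have "4 * X^2 = s^2 * Y^2" using e2 by (simp add: power_mult_distrib)
    then have "Y^2 * ?Q = 4 * ?Q" using XY by (simp add: algebra_simps)
    then show ?thesis using mult_right_cancel[of ?Q "Y^2" 4] Q by simp
  qed
qed

text \<open>The prime \<open>p\<close> divides at most one of the factors of
  \<open>(Xs + 2Y)(Xs - 2Y) = (s\<^sup>2 + 4)(X\<^sup>2 - 4)\<close>, so \<open>p^k = s\<^sup>2 + 4\<close> divides the other one.\<close>

lemma sum_two_squares_prime_power_imp_square_eq_4:
  fixes X Y s :: int and p k :: nat
  assumes p: "prime p" "odd p" and Q: "int (p ^ k) = s^2 + 4"
    and XY: "X^2 + Y^2 = s^2 + 4" and "even Y" "odd s"
    and coprime: "\<not> (int p dvd X \<and> int p dvd Y)"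
  shows "Y^2 = 4"
proof -
  have pri: "prime (int p)" using p by simp
  have p2: "\<not> int p dvd 2"
    using p prime_ge_2_nat[of p] by (auto dest!: zdvd_imp_le)
  have "k \<noteq> 0" using Q by (cases k) (auto simp: add_nonneg_eq_0_iff)
  then have "int p dvd s^2 + 4" using Q[symmetric] by (simp add: dvd_power)
  have ps: "\<not> int p dvd s"
  proof
    assume "int p dvd s"
    then have "int p dvd 2 * 2"
      using \<open>int p dvd s^2 + 4\<close> by (simp add: power2_eq_square dvd_add_right_iff)
    then show False using pri p2 prime_dvd_mult_iff by blast
  qed
  have "\<not> (int p dvd X * s + 2 * Y \<and> int p dvd X * s - 2 * Y)"
  proof
    assume a: "int p dvd X * s + 2 * Y \<and> int p dvd X * s - 2 * Y"
    then have "int p dvd (X * s + 2 * Y) + (X * s - 2 * Y)" using dvd_add by blast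
    then have "int p dvd 2 * (X * s)" by (simp add: algebra_simps)
    then have X: "int p dvd X" using pri ps p2 by (simp add: prime_dvd_mult_iff)
    then have "int p dvd 2 * Y" using a by (metis dvd_add_right_iff dvd_mult2)
    then have "int p dvd Y" using pri p2 by (simp add: prime_dvd_mult_iff)
    with X show False using coprime by blast
  qed
  moreover have "int p ^ k dvd (X * s + 2 * Y) * (X * s - 2 * Y)"
  proof -
    have "(X * s + 2 * Y) * (X * s - 2 * Y) = (s^2 + 4) * (X^2 - 4)"
      using XY by (simp add: power2_eq_square algebra_simps)
    then show ?thesis using Q by simp
  qed
  ultimately have "int p ^ k dvd X * s + 2 * 1 * Y \<or> int p ^ k dvd X * s + 2 * (-1) * Y"
    using pri by (auto simp: coprime_dvd_mult_left_iff coprime_dvd_mult_right_iff prime_imp_coprime)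
  then show ?thesis
    using sum_two_squares_dvd_imp_square_eq_4[OF _ XY _ \<open>even Y\<close> \<open>odd s\<close>, of 1]
      sum_two_squares_dvd_imp_square_eq_4[OF _ XY _ \<open>even Y\<close> \<open>odd s\<close>, of "-1"] Q
    by auto
qed

section \<open>Products of linear factors\<close>

lemma order_linear_factor: "order z [:-a, 1:] = (if z = a then 1 else 0)"
  for a z :: "'a::idom"
  using order_power_n_n[of a 1] by (auto intro: order_0I)

lemma order_prod_linear_factors:
  fixes h :: "'b \<Rightarrow> 'a::idom"
  assumes "finite S"
  shows "order z (\<Prod>b\<in>S. [:- h b, 1:]) = card {b\<in>S. h b = z}"
  using assms
proof (induction S rule: finite_induct)
  case (insert x S)
  have nz: "[:- h x, 1:] * (\<Prod>b\<in>S. [:- h b, 1:]) \<noteq> 0"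
    using insert.hyps(1) by (simp only: mult_eq_0_iff prod_zero_iff) auto
  have "order z (\<Prod>b\<in>insert x S. [:- h b, 1:]) = order z ([:- h x, 1:] * (\<Prod>b\<in>S. [:- h b, 1:]))"
    using insert.hyps by simp
  also have "\<dots> = order z [:- h x, 1:] + order z (\<Prod>b\<in>S. [:- h b, 1:])"
    by (rule order_mult[OF nz])
  also have "\<dots> = card {b\<in>insert x S. h b = z}"
  proof (cases "h x = z")
    case True
    then have "{b\<in>insert x S. h b = z} = insert x {b\<in>S. h b = z}" by auto
    then show ?thesis using True insert by (simp add: order_linear_factor)
  next
    case False
    then have "{b\<in>insert x S. h b = z} = {b\<in>S. h b = z}" by auto
    then show ?thesis using False insert by (simp add: order_linear_factor)
  qed
  finally show ?case .
qed (simp add: order_0I)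

lemma poly_roots_prod_linear_factors:
  "{z. poly (\<Prod>b\<in>UNIV. [:- h b, 1:]) z = 0} = range (h :: 'b::finite \<Rightarrow> 'a::idom)"
  by (auto simp: poly_prod)

section \<open>The quartic character of a field of order \<open>q \<equiv> 5 (mod 8)\<close>\<close>

locale quartic_setting =
  fixes g :: "'a::{field,finite}"
  assumes generator: "\<forall>x::'a. x \<noteq> 0 \<longrightarrow> (\<exists>k::nat. x = g ^ k)"
    and card_mod_8: "CARD('a) mod 8 = 5"
begin

definition f :: nat where "f = (CARD('a) - 1) div 4"

lemma card_eq_4f_plus_1: "CARD('a) = 4 * f + 1"
  using card_mod_8 unfolding f_def by presburger

lemma odd_f: "odd f"
  using card_mod_8 unfolding f_def by presburger

lemma f_pos: "f > 0"
  using odd_f by (cases f) auto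

lemma g_nonzero: "g \<noteq> 0"
proof
  assume g0: "g = 0"
  have "UNIV \<subseteq> {0, 1::'a}"
  proof
    fix x :: 'a
    show "x \<in> {0, 1}"
    proof (cases "x = 0")
      case False
      then obtain k where "x = g ^ k" using generator by blast
      then show ?thesis using g0 by (cases k) auto
    qed auto
  qed
  then have "CARD('a) \<le> card {0, 1::'a}" by (intro card_mono) auto
  then show False using card_eq_4f_plus_1 f_pos by simp
qed

lemma g_power_ne_1:
  assumes "0 < m" "m < CARD('a) - 1"
  shows "g ^ m \<noteq> 1"
proof
  assume gm: "g ^ m = 1"
  have "UNIV - {0::'a} \<subseteq> (\<lambda>k. g ^ k) ` {..<m}"
  proof
    fix x :: 'a assume "x \<in> UNIV - {0}"
    then obtain k where k: "x = g ^ k" using generator by blast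
    have "g ^ k = (g ^ m) ^ (k div m) * g ^ (k mod m)"
      by (simp flip: power_mult power_add)
    then show "x \<in> (\<lambda>k. g ^ k) ` {..<m}" using k gm assms(1) by auto
  qed
  then have "card (UNIV - {0::'a}) \<le> card ((\<lambda>k. g ^ k) ` {..<m})"
    by (intro card_mono) auto
  also have "\<dots> \<le> m" using card_image_le[of "{..<m}" "\<lambda>k. g ^ k"] by simp
  finally show False using assms by (simp add: card_Diff_singleton)
qed

definition iota :: 'a where "iota = g ^ f"

lemma iota_square: "iota ^ 2 = -1"
proof -
  have "(iota ^ 2) ^ 2 = g ^ (CARD('a) - 1)"
    using card_eq_4f_plus_1 by (simp add: iota_def mult.commute flip: power_mult)
  then have "(iota ^ 2) ^ 2 = 1"
    using finite_field_power_card_minus_one[OF g_nonzero] by simp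
  moreover have "iota ^ 2 \<noteq> 1"
    using g_power_ne_1[of "f * 2"] f_pos card_eq_4f_plus_1 by (simp add: iota_def power_mult)
  ultimately show ?thesis by (metis power2_eq_1_iff)
qed

lemma two_nonzero: "(2::'a) \<noteq> 0"
proof
  assume "(2::'a) = 0"
  then have "CHAR('a) dvd 2" using of_nat_eq_0_iff_char_dvd[of 2, where 'a='a] by simp
  then have "CHAR('a) = 2" using CHAR_finite_field_ge_2[where 'a='a] by (simp add: dvd_imp_le le_antisym)
  moreover obtain k where "CARD('a) = CHAR('a) ^ k" using card_finite_field_CHAR_power by blast
  moreover have "odd CARD('a)" using card_eq_4f_plus_1 by simp
  ultimately show False using card_eq_4f_plus_1 f_pos by (cases k) auto
qed

lemma one_ne_minus_one: "(1::'a) \<noteq> -1"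
  using two_nonzero by (metis one_add_one eq_neg_iff_add_eq_0)

lemma iota_neqs: "iota \<noteq> 1" "iota \<noteq> -1" "iota \<noteq> 0" "-iota \<noteq> 1" "-iota \<noteq> -1" "iota \<noteq> -iota"
proof -
  show i1: "iota \<noteq> 1" using iota_square one_ne_minus_one by auto
  show im1: "iota \<noteq> -1" using iota_square one_ne_minus_one by (auto simp: power2_eq_square)
  show i0: "iota \<noteq> 0" using iota_square one_ne_minus_one by auto
  show "-iota \<noteq> 1" "-iota \<noteq> -1" using i1 im1 by (auto simp: minus_equation_iff[of iota])
  show "iota \<noteq> -iota"
  proof
    assume "iota = -iota"
    then have "iota + iota = 0" by (metis add.right_inverse)
    then have "2 * iota = 0" by (simp only: mult_2)
    then show False using two_nonzero i0 by simp
  qed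
qed

definition fourth_roots :: "'a set" where "fourth_roots = {1, iota, -1, -iota}"

lemma power_f_in_fourth_roots: "x \<noteq> 0 \<Longrightarrow> x ^ f \<in> fourth_roots"
proof -
  assume "x \<noteq> 0"
  then obtain k where "x = g ^ k" using generator by blast
  then have "x ^ f = iota ^ k" by (simp add: iota_def mult.commute flip: power_mult)
  moreover have "iota ^ k \<in> fourth_roots" for k
    by (induction k) (use iota_square in \<open>auto simp: fourth_roots_def power2_eq_square\<close>)
  ultimately show ?thesis by simp
qed

text \<open>Identifies the fourth roots of unity in the field with those in \<open>\<complex>\<close>, sending \<open>g^f\<close>
  to \<open>\<i>\<close>; all other elements go to \<open>0\<close>.\<close>

definition embed :: "'a \<Rightarrow> complex" where
  "embed u = (if u = 1 then 1 else if u = iota then \<i> else if u = -1 then -1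
     else if u = -iota then -\<i> else 0)"

lemma embed_simps: "embed 1 = 1" "embed iota = \<i>" "embed (-1) = -1" "embed (-iota) = -\<i>" "embed 0 = 0"
  using iota_neqs one_ne_minus_one by (auto simp: embed_def)

lemma embed_mult: "u \<in> fourth_roots \<Longrightarrow> v \<in> fourth_roots \<Longrightarrow> embed (u * v) = embed u * embed v"
  using iota_square by (auto simp: fourth_roots_def embed_simps power2_eq_square)

definition chi :: "'a \<Rightarrow> complex" where "chi x = embed (x ^ f)"

lemma chi_0 [simp]: "chi 0 = 0"
  using f_pos by (simp add: chi_def embed_simps zero_power)

lemma chi_1 [simp]: "chi 1 = 1"
  by (simp add: chi_def embed_simps)

lemma chi_mult: "chi (x * y) = chi x * chi y"
proof (cases "x = 0 \<or> y = 0")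
  case False
  then show ?thesis
    unfolding chi_def using power_f_in_fourth_roots embed_mult by (simp add: power_mult_distrib)
qed auto

lemma chi_values: "x \<noteq> 0 \<Longrightarrow> chi x \<in> {1, \<i>, -1, -\<i>}"
  using power_f_in_fourth_roots[of x] by (auto simp: chi_def fourth_roots_def embed_simps)

lemma chi_g: "chi g = \<i>"
  by (simp add: chi_def embed_simps flip: iota_def)

lemma chi_minus_one: "chi (-1) = -1"
  using odd_f by (simp add: chi_def embed_simps)

lemma chi_uminus: "chi (- x) = - chi x"
  using chi_mult[of "-1" x] by (simp add: chi_minus_one)

lemma chi_power: "chi (x ^ n) = chi x ^ n"
  by (induction n) (simp_all add: chi_mult)

lemma cnj_chi_mult_chi: "x \<noteq> 0 \<Longrightarrow> cnj (chi x) * chi x = 1"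
  using chi_values[of x] by auto

lemma chi_inverse: "chi (inverse x) = cnj (chi x)"
proof (cases "x = 0")
  case False
  then have "chi (inverse x) * chi x = 1" by (simp flip: chi_mult)
  then show ?thesis using cnj_chi_mult_chi[OF False] by (metis mult_cancel_right mult_zero_right zero_neq_one)
qed simp

lemma cnj_chi_square: "cnj (chi x) ^ 2 = chi x ^ 2"
  using chi_values[of x] by (cases "x = 0") auto

end

context quartic_setting
begin

lemma sum_chi_power:
  assumes "\<i> ^ m \<noteq> 1"
  shows "(\<Sum>x\<in>UNIV. chi x ^ m) = 0"
proof -
  have "(\<Sum>x\<in>UNIV. chi x ^ m) = (\<Sum>x\<in>UNIV. chi (g * x) ^ m)"
    by (rule sum_UNIV_scale[OF g_nonzero, symmetric])
  also have "\<dots> = \<i> ^ m * (\<Sum>x\<in>UNIV. chi x ^ m)"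
    by (simp add: chi_mult chi_g power_mult_distrib sum_distrib_left)
  finally have "(1 - \<i> ^ m) * (\<Sum>x\<in>UNIV. chi x ^ m) = 0" by (simp add: algebra_simps)
  then show ?thesis using assms by simp
qed

lemma card_chi_eq_i_mult: "card {x. chi x = \<i> * c} = card {x. chi x = c}"
proof -
  have "(\<lambda>x. g * x) ` {x. chi x = c} = {x. chi x = \<i> * c}"
  proof (intro equalityI subsetI)
    fix x assume "x \<in> {x. chi x = \<i> * c}"
    then have "chi (x / g) = c" using chi_mult[of g "x / g"] g_nonzero by (simp add: chi_g)
    then show "x \<in> (\<lambda>x. g * x) ` {x. chi x = c}" using g_nonzero by (intro image_eqI[of _ _ "x / g"]) auto
  qed (auto simp: chi_mult chi_g)
  moreover have "inj_on (\<lambda>x. g * x) {x. chi x = c}" using g_nonzero by (auto simp: inj_on_def)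
  ultimately show ?thesis by (metis card_image)
qed

lemma card_chi_eq:
  assumes "c \<in> {1, \<i>, -1, -\<i>}"
  shows "card {x. chi x = c} = f"
proof -
  have e: "card {x. chi x = \<i>} = card {x. chi x = 1}" "card {x. chi x = -1} = card {x. chi x = 1}"
    "card {x. chi x = -\<i>} = card {x. chi x = 1}"
    using card_chi_eq_i_mult[of 1] card_chi_eq_i_mult[of "\<i>"] card_chi_eq_i_mult[of "-1"] by simp_all
  have "UNIV - {0} = {x. chi x = 1} \<union> {x. chi x = \<i>} \<union> {x. chi x = -1} \<union> {x. chi x = -\<i>}"
    using chi_values by (auto simp: complex_eq_iff)
  then have "CARD('a) - 1 = card ({x. chi x = 1} \<union> {x. chi x = \<i>} \<union> {x. chi x = -1} \<union> {x. chi x = -\<i>})"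
    by (metis card_Diff_singleton finite UNIV_I)
  also have "\<dots> = card {x. chi x = 1} + card {x. chi x = \<i>} + card {x. chi x = -1} + card {x. chi x = -\<i>}"
    by (simp add: card_Un_disjoint set_eq_iff complex_eq_iff)
  finally have "card {x. chi x = 1} = f" using e card_eq_4f_plus_1 by simp
  then show ?thesis using assms e by auto
qed

lemma mem_cyc_class_iff:
  assumes "j < 4"
  shows "x \<in> cyc_class g j \<longleftrightarrow> x \<noteq> 0 \<and> chi x = \<i> ^ j"
proof
  assume "x \<in> cyc_class g j"
  then obtain y where y: "x = g ^ j * y ^ 4" "y \<noteq> 0" by (auto simp: cyc_class_def)
  have "chi y ^ 4 = 1" using chi_values[OF y(2)] by (auto simp: power4_eq_xxxx)
  then show "x \<noteq> 0 \<and> chi x = \<i> ^ j"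
    using g_nonzero y by (simp add: chi_mult chi_power chi_g)
next
  assume x: "x \<noteq> 0 \<and> chi x = \<i> ^ j"
  then obtain k where k: "x = g ^ k" using generator by blast
  have "g ^ k = g ^ (k mod 4 + 4 * (k div 4))" by simp
  then have "x = g ^ (k mod 4) * (g ^ (k div 4)) ^ 4"
    using k by (simp only: power_add power_mult mult.commute[of 4])
  moreover have "k mod 4 = j"
  proof -
    have "\<i> ^ k = \<i> ^ (4 * (k div 4) + k mod 4)" by simp
    also have "\<dots> = (\<i> ^ 4) ^ (k div 4) * \<i> ^ (k mod 4)" by (simp only: power_add power_mult)
    also have "\<i> ^ 4 = (1::complex)" by (simp add: power4_eq_xxxx)
    finally have "\<i> ^ k = \<i> ^ (k mod 4)" by simp
    then have "\<i> ^ (k mod 4) = \<i> ^ j" using x k by (simp add: chi_power chi_g)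
    moreover have "k mod 4 = 0 \<or> k mod 4 = 1 \<or> k mod 4 = 2 \<or> k mod 4 = 3"
      "j = 0 \<or> j = 1 \<or> j = 2 \<or> j = 3" using assms by arith+
    ultimately show ?thesis
      by (elim disjE) (simp_all add: complex_eq_iff power2_eq_square power3_eq_cube)
  qed
  moreover have "g ^ (k div 4) \<noteq> 0" using g_nonzero by simp
  ultimately show "x \<in> cyc_class g j" unfolding cyc_class_def by blast
qed

lemma cyc_D_eq: "cyc_D g = {x. chi x = 1} \<union> {x. chi x = \<i>}"
proof -
  have mem: "x \<in> cyc_D g \<longleftrightarrow> x \<noteq> 0 \<and> (chi x = 1 \<or> chi x = \<i>)" for x
    unfolding cyc_D_def using mem_cyc_class_iff[of 0 x] mem_cyc_class_iff[of 1 x] by auto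
  show ?thesis
  proof (rule set_eqI)
    fix x
    show "x \<in> cyc_D g \<longleftrightarrow> x \<in> {x. chi x = 1} \<union> {x. chi x = \<i>}"
      using mem[of x] by (cases "x = 0") simp_all
  qed
qed

lemma card_cyc_D: "card (cyc_D g) = 2 * f"
proof -
  have "card (cyc_D g) = card {x. chi x = 1} + card {x. chi x = \<i>}"
    unfolding cyc_D_eq by (rule card_Un_disjoint) (auto simp: complex_eq_iff)
  then show ?thesis using card_chi_eq[of 1] card_chi_eq[of "\<i>"] by simp
qed

lemma indicator_cyc_D:
  "(if x \<in> cyc_D g then 1 else 0) =
     1/2 + ((1 - \<i>) * chi x + (1 + \<i>) * cnj (chi x)) / 4 - (if x = 0 then 1/2 else 0)"
  using chi_values[of x] by (cases "x = 0") (auto simp: cyc_D_eq complex_eq_iff)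

end

context quartic_setting
begin

lemma sum_power_UNIV:
  assumes "m > 0"
  shows "(\<Sum>t\<in>UNIV. (t::'a) ^ m) = (if (CARD('a) - 1) dvd m then -1 else 0)"
proof (cases "(CARD('a) - 1) dvd m")
  case True
  then obtain l where l: "m = (CARD('a) - 1) * l" by blast
  have "(\<Sum>t\<in>UNIV. (t::'a) ^ m) = 0 ^ m + (\<Sum>t\<in>UNIV-{0}. t ^ m)"
    by (subst sum.remove[of _ 0]) auto
  also have "(\<Sum>t\<in>UNIV-{0}. (t::'a) ^ m) = (\<Sum>t\<in>UNIV-{0::'a}. 1)"
  proof (rule sum.cong[OF refl])
    fix t :: 'a assume "t \<in> UNIV - {0}"
    then have "t ^ (CARD('a) - 1) = 1" by (intro finite_field_power_card_minus_one) simp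
    then show "t ^ m = 1" by (simp only: l power_mult) simp
  qed
  also have "\<dots> = of_nat CARD('a) - 1"
    using card_eq_4f_plus_1 by (simp add: card_Diff_singleton of_nat_diff)
  finally show ?thesis using True assms by (simp add: of_nat_CARD_finite_field)
next
  case False
  have "g ^ m = g ^ ((CARD('a) - 1) * (m div (CARD('a) - 1)) + m mod (CARD('a) - 1))" by simp
  also have "\<dots> = g ^ (m mod (CARD('a) - 1))"
    by (simp only: power_add power_mult finite_field_power_card_minus_one[OF g_nonzero]) simp
  finally have "g ^ m = g ^ (m mod (CARD('a) - 1))" .
  moreover have "m mod (CARD('a) - 1) \<noteq> 0" using False by (simp add: mod_eq_0_iff_dvd)
  moreover have "m mod (CARD('a) - 1) < CARD('a) - 1" using card_eq_4f_plus_1 f_pos by simp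
  ultimately have "g ^ m \<noteq> 1" using g_power_ne_1[of "m mod (CARD('a) - 1)"] by simp
  have "(\<Sum>t\<in>UNIV. (t::'a) ^ m) = (\<Sum>t\<in>UNIV. (g * t) ^ m)"
    by (rule sum_UNIV_scale[OF g_nonzero, symmetric])
  also have "\<dots> = g ^ m * (\<Sum>t\<in>UNIV. t ^ m)" by (simp add: power_mult_distrib sum_distrib_left)
  finally have "(1 - g ^ m) * (\<Sum>t\<in>UNIV. (t::'a) ^ m) = 0" by (simp add: algebra_simps)
  then show ?thesis using False \<open>g ^ m \<noteq> 1\<close> by simp
qed

text \<open>After expanding \<open>(t(1 - t))^(3f)\<close>, only the monomial \<open>t^(4f) = t^(q - 1)\<close> has a
  nonzero sum over the field.\<close>

lemma sum_power_t_one_minus_t: "(\<Sum>t\<in>UNIV. ((t::'a) * (1 - t)) ^ (3 * f)) = of_nat ((3 * f) choose f)"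
proof -
  let ?n = "3 * f"
  have "(\<Sum>t\<in>UNIV. ((t::'a) * (1 - t)) ^ ?n)
      = (\<Sum>t\<in>UNIV. \<Sum>k\<le>?n. of_nat (?n choose k) * (-1) ^ k * t ^ (?n + k))"
  proof (rule sum.cong[OF refl])
    fix t :: 'a
    have "(1 - t) ^ ?n = (-t + 1) ^ ?n" by simp
    also have "\<dots> = (\<Sum>k\<le>?n. of_nat (?n choose k) * (-t) ^ k * 1 ^ (?n - k))" by (rule binomial_ring)
    finally have "(1 - t) ^ ?n = (\<Sum>k\<le>?n. of_nat (?n choose k) * (-1) ^ k * t ^ k)"
      by (simp add: power_minus_mult[symmetric] power_mult_distrib[symmetric] mult.assoc)
    then show "(t * (1 - t)) ^ ?n = (\<Sum>k\<le>?n. of_nat (?n choose k) * (-1) ^ k * t ^ (?n + k))"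
      by (simp add: power_mult_distrib sum_distrib_left power_add mult_ac)
  qed
  also have "\<dots> = (\<Sum>k\<le>?n. of_nat (?n choose k) * (-1) ^ k * (\<Sum>t\<in>UNIV. t ^ (?n + k)))"
    by (subst sum.swap) (simp add: sum_distrib_left)
  also have "\<dots> = (\<Sum>k\<le>?n. if k = f then of_nat (?n choose f) else 0)"
  proof (rule sum.cong[OF refl])
    fix k assume k: "k \<in> {..?n}"
    have "(CARD('a) - 1) dvd (?n + k) \<longleftrightarrow> k = f"
    proof
      assume "(CARD('a) - 1) dvd (?n + k)"
      then obtain l where l: "?n + k = 4 * f * l" using card_eq_4f_plus_1 by auto
      then have "l \<noteq> 0" using f_pos by (cases l) auto
      moreover have "l < 2"
      proof (rule ccontr)
        assume "\<not> l < 2"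
        then have "4 * f * 2 \<le> 4 * f * l" by (intro mult_le_mono2) simp
        moreover have "k \<le> 3 * f" using k by simp
        ultimately show False using l f_pos by linarith
      qed
      ultimately show "k = f" using l by (cases l) auto
    qed (simp add: card_eq_4f_plus_1)
    then show "of_nat (?n choose k) * (-1) ^ k * (\<Sum>t\<in>UNIV. (t::'a) ^ (?n + k)) =
          (if k = f then of_nat (?n choose f) else 0)"
      using sum_power_UNIV[of "?n + k"] f_pos odd_f by auto
  qed
  also have "\<dots> = of_nat (?n choose f)" by simp
  finally show ?thesis .
qed

lemma CHAR_mod_4: "CHAR('a) mod 4 = 1"
proof -
  obtain k where k: "CARD('a) = CHAR('a) ^ k" using card_finite_field_CHAR_power by blast
  have "CHAR('a) dvd CARD('a)"
    using of_nat_CARD_finite_field[where 'a='a] by (simp add: of_nat_eq_0_iff_char_dvd)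
  then have "odd CHAR('a)" using card_eq_4f_plus_1 by (metis dvd_trans even_mult_iff odd_one odd_add even_numeral)
  then show ?thesis using odd_power_mod_8_eq_5_imp_mod_4 k card_mod_8 by simp
qed

lemma of_nat_choose_3f_f_nonzero: "(of_nat ((3 * f) choose f) :: 'a) \<noteq> 0"
proof -
  obtain k where k: "CARD('a) = CHAR('a) ^ k" using card_finite_field_CHAR_power by blast
  show ?thesis
    using of_nat_choose_three_quarter_nonzero[OF prime_CHAR_finite_field CHAR_mod_4, of k]
    by (simp add: f_def k)
qed

end

lemma even_sum_fixed_point_free_involution:
  fixes h :: "'b \<Rightarrow> int"
  assumes "finite S" "\<And>x. x \<in> S \<Longrightarrow> \<sigma> x \<in> S" "\<And>x. x \<in> S \<Longrightarrow> \<sigma> x \<noteq> x"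
    "\<And>x. x \<in> S \<Longrightarrow> \<sigma> (\<sigma> x) = x" "\<And>x. x \<in> S \<Longrightarrow> h (\<sigma> x) = h x"
  shows "even (\<Sum>x\<in>S. h x)"
  using assms
proof (induction "card S" arbitrary: S rule: less_induct)
  case less
  show ?case
  proof (cases "S = {}")
    case False
    then obtain x where x: "x \<in> S" by blast
    define S' where "S' = S - {x, \<sigma> x}"
    have \<sigma>x: "\<sigma> x \<in> S" "\<sigma> x \<noteq> x" using less.prems x by auto
    have "(\<Sum>y\<in>S. h y) = h x + h (\<sigma> x) + (\<Sum>y\<in>S'. h y)"
      using less.prems(1) x \<sigma>x unfolding S'_def
      by (simp add: sum.remove[of S x] sum.remove[of "S - {x}" "\<sigma> x"] Diff_insert2[symmetric] insert_commute)
    moreover have "even (\<Sum>y\<in>S'. h y)"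
    proof (rule less.hyps)
      show "card S' < card S"
        unfolding S'_def using less.prems(1) x by (intro psubset_card_mono) auto
      show "\<And>y. y \<in> S' \<Longrightarrow> \<sigma> y \<in> S'"
        unfolding S'_def using less.prems x by auto (metis)+
    qed (use less.prems in \<open>auto simp: S'_def\<close>)
    ultimately show ?thesis using less.prems(5)[OF x] by simp
  qed simp
qed

context quartic_setting
begin

definition jacobi_term :: "'a \<Rightarrow> complex" where "jacobi_term t = chi t * chi (1 - t)"

definition jacobi_re :: "'a \<Rightarrow> int" where
  "jacobi_re t = (if jacobi_term t = 1 then 1 else if jacobi_term t = -1 then -1 else 0)"

definition jacobi_im :: "'a \<Rightarrow> int" where
  "jacobi_im t = (if jacobi_term t = \<i> then 1 else if jacobi_term t = -\<i> then -1 else 0)"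

definition jacobi_X :: int where "jacobi_X = (\<Sum>t\<in>UNIV. jacobi_re t)"
definition jacobi_Y :: int where "jacobi_Y = (\<Sum>t\<in>UNIV. jacobi_im t)"

lemma jacobi_term_values: "jacobi_term t \<in> {0, 1, \<i>, -1, -\<i>}"
  unfolding jacobi_term_def chi_mult[symmetric] using chi_values[of "t * (1 - t)"]
  by (cases "t * (1 - t) = 0") auto

lemma sum_jacobi_term: "(\<Sum>t\<in>UNIV. jacobi_term t) = of_int jacobi_X + \<i> * of_int jacobi_Y"
proof -
  have "jacobi_term t = of_int (jacobi_re t) + \<i> * of_int (jacobi_im t)" for t
    using jacobi_term_values[of t] by (auto simp: jacobi_re_def jacobi_im_def complex_eq_iff)
  then show ?thesis by (simp add: jacobi_X_def jacobi_Y_def sum.distrib sum_distrib_left)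
qed

text \<open>The terms at \<open>t\<close> and \<open>1 - t\<close> agree, and the only fixed point \<open>t = 1/2\<close> contributes
  \<open>\<chi>(1/2)\<^sup>2 = \<plusminus>1\<close>, which is real.\<close>

lemma even_jacobi_Y: "even jacobi_Y"
proof -
  define h where "h = inverse (2::'a)"
  have h1: "1 - h = h" using two_nonzero unfolding h_def by (simp add: field_simps)
  have fix_iff: "1 - t = t \<longleftrightarrow> t = h" for t :: 'a
    using two_nonzero unfolding h_def by (auto simp: field_simps)
  have "jacobi_term h = chi h ^ 2" unfolding jacobi_term_def h1 by (simp add: power2_eq_square)
  moreover have "h \<noteq> 0" using two_nonzero by (simp add: h_def)
  ultimately have "jacobi_im h = 0"
    using chi_values[of h] by (auto simp: jacobi_im_def complex_eq_iff power2_eq_square)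
  moreover have "even (\<Sum>t\<in>UNIV - {h}. jacobi_im t)"
  proof (rule even_sum_fixed_point_free_involution[where \<sigma>="\<lambda>t. 1 - t"])
    fix x assume "x \<in> UNIV - {h}"
    then show "1 - x \<in> UNIV - {h}" "1 - x \<noteq> x" using fix_iff[of x] h1 by auto
    show "jacobi_im (1 - x) = jacobi_im x" by (simp add: jacobi_im_def jacobi_term_def mult.commute)
  qed simp_all
  ultimately show ?thesis
    unfolding jacobi_Y_def by (subst sum.remove[of _ h]) auto
qed

text \<open>For a fourth root of unity \<open>u\<close> we have \<open>u^3 = u^(-1)\<close>, so \<open>(t(1 - t))^(3f)\<close> is the
  complex conjugate of the Jacobi term, read in the field with \<open>g^f\<close> in place of \<open>\<i>\<close>.\<close>

lemma power_3f_jacobi: "(t * (1 - t)) ^ (3 * f) = of_int (jacobi_re t) - iota * of_int (jacobi_im t)"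
proof (cases "t * (1 - t) = 0")
  case True
  then have "jacobi_term t = 0" unfolding jacobi_term_def chi_mult[symmetric] by (simp only: chi_0)
  then show ?thesis using True f_pos by (simp add: jacobi_re_def jacobi_im_def zero_power)
next
  case False
  define u where "u = (t * (1 - t)) ^ f"
  have u: "u \<in> fourth_roots" using power_f_in_fourth_roots[OF False] by (simp add: u_def)
  have "jacobi_term t = chi (t * (1 - t))" by (simp add: jacobi_term_def chi_mult)
  also have "\<dots> = embed u" by (simp add: chi_def u_def)
  finally have "jacobi_term t = embed u" .
  moreover have "(t * (1 - t)) ^ (3 * f) = u ^ 3" by (simp add: u_def power_mult mult.commute)
  moreover have "iota ^ 3 = - iota" using iota_square by (simp add: power3_eq_cube power2_eq_square)
  ultimately show ?thesis
    using u iota_neqs one_ne_minus_one iota_square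
    by (auto simp: fourth_roots_def jacobi_re_def jacobi_im_def embed_simps complex_eq_iff
        power2_eq_square power3_eq_cube)
qed

lemma jacobi_congruence: "(of_int jacobi_X :: 'a) - iota * of_int jacobi_Y = of_nat ((3 * f) choose f)"
proof -
  have "(of_int jacobi_X :: 'a) - iota * of_int jacobi_Y
      = (\<Sum>t\<in>UNIV. of_int (jacobi_re t) - iota * of_int (jacobi_im t))"
    unfolding jacobi_X_def jacobi_Y_def by (simp add: sum_subtractf sum_distrib_left)
  also have "\<dots> = (\<Sum>t\<in>UNIV. (t * (1 - t)) ^ (3 * f))" by (simp add: power_3f_jacobi)
  finally show ?thesis by (simp add: sum_power_t_one_minus_t)
qed

lemma not_CHAR_dvd_jacobi_X_Y: "\<not> (int CHAR('a) dvd jacobi_X \<and> int CHAR('a) dvd jacobi_Y)"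
proof
  assume "int CHAR('a) dvd jacobi_X \<and> int CHAR('a) dvd jacobi_Y"
  then have "(of_int jacobi_X :: 'a) = 0" "(of_int jacobi_Y :: 'a) = 0"
    by (simp_all add: of_int_eq_0_iff_char_dvd)
  then show False using jacobi_congruence of_nat_choose_3f_f_nonzero by simp
qed

end

section \<open>Gauss sums\<close>

locale quartic_gauss_sums = quartic_setting g + additive_character psi
  for g :: "'a::{field,finite}" and psi :: "'a \<Rightarrow> complex"
begin

definition gauss :: complex where "gauss = (\<Sum>x\<in>UNIV. chi x * psi x)"
definition gauss_quadratic :: complex where "gauss_quadratic = (\<Sum>x\<in>UNIV. chi x ^ 2 * psi x)"

lemma norm_gauss: "cnj gauss * gauss = of_nat CARD('a)"
  unfolding gauss_def
  by (rule gauss_sum_norm) (auto simp: chi_mult cnj_chi_mult_chi sum_chi_power[of 1, simplified])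

lemma norm_gauss_quadratic: "cnj gauss_quadratic * gauss_quadratic = of_nat CARD('a)"
  unfolding gauss_quadratic_def
proof (rule gauss_sum_norm)
  fix x :: 'a assume "x \<noteq> 0"
  then show "cnj (chi x ^ 2) * chi x ^ 2 = 1" using chi_values[of x] by auto
qed (auto simp: chi_mult power_mult_distrib sum_chi_power[of 2, simplified])

lemma cnj_gauss_quadratic: "cnj gauss_quadratic = gauss_quadratic"
proof -
  have "cnj gauss_quadratic = (\<Sum>x\<in>UNIV. chi x ^ 2 * psi (- x))"
    unfolding gauss_quadratic_def by (simp add: cnj_sum psi_uminus cnj_chi_square)
  also have "\<dots> = (\<Sum>x\<in>UNIV. chi (- x) ^ 2 * psi (- (- x)))"
    by (rule sum_UNIV_uminus[symmetric])
  also have "\<dots> = gauss_quadratic" unfolding gauss_quadratic_def by (simp add: chi_uminus)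
  finally show ?thesis .
qed

lemma cnj_chi_mult_gauss: "(\<Sum>x\<in>UNIV. cnj (chi x) * psi x) = - cnj gauss"
proof -
  have "cnj gauss = (\<Sum>x\<in>UNIV. cnj (chi x) * psi (- x))"
    unfolding gauss_def by (simp add: cnj_sum psi_uminus)
  also have "\<dots> = (\<Sum>x\<in>UNIV. cnj (chi (- x)) * psi (- (- x)))"
    by (rule sum_UNIV_uminus[symmetric])
  also have "\<dots> = - (\<Sum>x\<in>UNIV. cnj (chi x) * psi x)"
    by (simp add: chi_uminus sum_negf)
  finally show ?thesis by simp
qed

lemma sum_chi_mult_chi_diff: "(\<Sum>x\<in>UNIV. chi x * chi (u - x)) = chi u ^ 2 * (\<Sum>t\<in>UNIV. jacobi_term t)"
proof (cases "u = 0")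
  case True
  then show ?thesis
    using sum_chi_power[of 2] by (simp add: chi_uminus power2_eq_square sum_negf)
next
  case False
  have "(\<Sum>x\<in>UNIV. chi x * chi (u - x)) = (\<Sum>t\<in>UNIV. chi (u * t) * chi (u - u * t))"
    by (rule sum_UNIV_scale[OF False, symmetric])
  also have "\<dots> = (\<Sum>t\<in>UNIV. chi u ^ 2 * jacobi_term t)"
  proof (rule sum.cong[OF refl])
    fix t
    have "u - u * t = u * (1 - t)" by (simp add: algebra_simps)
    then show "chi (u * t) * chi (u - u * t) = chi u ^ 2 * jacobi_term t"
      by (simp add: chi_mult jacobi_term_def power2_eq_square mult_ac)
  qed
  finally show ?thesis by (simp add: sum_distrib_left)
qed

lemma gauss_square: "gauss * gauss = (\<Sum>t\<in>UNIV. jacobi_term t) * gauss_quadratic"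
proof -
  have "gauss * gauss = (\<Sum>x\<in>UNIV. \<Sum>y\<in>UNIV. chi x * chi y * psi (x + y))"
    unfolding gauss_def by (simp add: sum_product psi_add mult_ac)
  also have "\<dots> = (\<Sum>x\<in>UNIV. \<Sum>u\<in>UNIV. chi x * chi (u - x) * psi u)"
  proof (rule sum.cong[OF refl])
    fix x :: 'a
    show "(\<Sum>y\<in>UNIV. chi x * chi y * psi (x + y)) = (\<Sum>u\<in>UNIV. chi x * chi (u - x) * psi u)"
      using sum_UNIV_translate[of "\<lambda>u. chi x * chi (u - x) * psi u" x] by (simp add: add.commute)
  qed
  also have "\<dots> = (\<Sum>u\<in>UNIV. psi u * (\<Sum>x\<in>UNIV. chi x * chi (u - x)))"
    by (subst sum.swap) (simp add: sum_distrib_left mult_ac)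
  also have "\<dots> = (\<Sum>t\<in>UNIV. jacobi_term t) * gauss_quadratic"
    by (simp add: sum_chi_mult_chi_diff gauss_quadratic_def sum_distrib_left mult_ac)
  finally show ?thesis .
qed

end

section \<open>The eigenvalues of the cyclotomic tournament\<close>

context quartic_gauss_sums
begin

definition eigenvalue :: "'a \<Rightarrow> complex" where
  "eigenvalue b = (\<Sum>d\<in>cyc_D g. psi (- (b * d)))"

lemma eigenvalue_0: "eigenvalue 0 = of_nat (2 * f)"
  by (simp add: eigenvalue_def card_cyc_D psi_0)

lemma eigenvalue_nonzero_gauss:
  assumes b: "b \<noteq> 0"
  shows "eigenvalue b = -1/2 + ((1 - \<i>) * cnj (chi (-b)) * gauss - (1 + \<i>) * chi (-b) * cnj gauss) / 4"
proof -
  define c where "c = inverse (- b)"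
  have c0: "c \<noteq> 0" using b by (simp add: c_def)
  have bc: "- (b * (c * z)) = z" for z using b by (simp add: c_def)
  have chi_c: "chi c = cnj (chi (-b))" unfolding c_def by (rule chi_inverse)
  have S1: "(\<Sum>x\<in>UNIV. psi (- (b * x))) = 0"
    using sum_psi_mult[of "-b"] b by simp
  have S2: "(\<Sum>x\<in>UNIV. chi x * psi (- (b * x))) = cnj (chi (-b)) * gauss"
    using sum_UNIV_scale[OF c0, of "\<lambda>x. chi x * psi (- (b * x))"]
    by (simp add: bc chi_mult chi_c mult.assoc gauss_def sum_distrib_left)
  have S3: "(\<Sum>x\<in>UNIV. cnj (chi x) * psi (- (b * x))) = - chi (-b) * cnj gauss"
    using sum_UNIV_scale[OF c0, of "\<lambda>x. cnj (chi x) * psi (- (b * x))"] cnj_chi_mult_gauss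
    by (simp add: bc chi_mult chi_c mult.assoc flip: sum_distrib_left)
  have "eigenvalue b = (\<Sum>x\<in>UNIV. if x \<in> cyc_D g then psi (- (b * x)) else 0)"
    unfolding eigenvalue_def by (simp add: sum.inter_restrict[symmetric])
  also have "\<dots> = (\<Sum>x\<in>UNIV. (if x \<in> cyc_D g then 1 else 0) * psi (- (b * x)))"
    by (rule sum.cong) auto
  also have "\<dots> = (\<Sum>x\<in>UNIV. (1/2) * psi (- (b * x)) + ((1 - \<i>) / 4) * (chi x * psi (- (b * x)))
        + ((1 + \<i>) / 4) * (cnj (chi x) * psi (- (b * x))) - (if x = 0 then 1/2 else 0))"
    by (rule sum.cong[OF refl], subst indicator_cyc_D)
       (auto simp: algebra_simps psi_0 diff_divide_distrib add_divide_distrib)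
  also have "\<dots> = (1/2) * (\<Sum>x\<in>UNIV. psi (- (b * x))) + ((1 - \<i>) / 4) * (\<Sum>x\<in>UNIV. chi x * psi (- (b * x)))
        + ((1 + \<i>) / 4) * (\<Sum>x\<in>UNIV. cnj (chi x) * psi (- (b * x))) - 1/2"
    by (simp add: sum.distrib sum_subtractf sum_distrib_left)
  also have "\<dots> = -1/2 + ((1 - \<i>) * cnj (chi (-b)) * gauss - (1 + \<i>) * chi (-b) * cnj gauss) / 4"
    by (simp only: S1 S2 S3) (simp add: algebra_simps diff_divide_distrib add_divide_distrib)
  finally show ?thesis .
qed

definition gauss_twist_Im :: "complex \<Rightarrow> real" where
  "gauss_twist_Im c = Im ((1 - \<i>) * cnj c * gauss)"

lemma eigenvalue_nonzero:
  assumes "b \<noteq> 0"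
  shows "eigenvalue b = Complex (-1/2) (gauss_twist_Im (chi (-b)) / 2)"
proof -
  define W where "W = (1 - \<i>) * cnj (chi (-b)) * gauss"
  have "(1 + \<i>) * chi (-b) * cnj gauss = cnj W" by (simp add: W_def)
  then have "eigenvalue b = -1/2 + (W - cnj W) / 4"
    using eigenvalue_nonzero_gauss[OF assms] by (simp only: W_def[symmetric])
  then show ?thesis unfolding gauss_twist_Im_def W_def[symmetric] by (simp add: complex_eq_iff)
qed

lemma ct_adj_mult_character:
  "(\<Sum>y\<in>UNIV. ct_adj g $ x $ y * psi (b * y)) = psi (b * x) * eigenvalue b"
proof -
  define h where "h d = (if d \<in> cyc_D g then 1 else 0) * psi (b * (x - d))" for d
  have "(\<Sum>y\<in>UNIV. ct_adj g $ x $ y * psi (b * y)) = (\<Sum>y\<in>UNIV. h (x - y))"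
    by (simp add: h_def ct_adj_def)
  also have "\<dots> = (\<Sum>d\<in>UNIV. h d)" by (rule sum_UNIV_reflect)
  also have "\<dots> = (\<Sum>d\<in>UNIV. if d \<in> cyc_D g then psi (b * x) * psi (- (b * d)) else 0)"
    by (rule sum.cong[OF refl]) (simp add: h_def right_diff_distrib psi_diff psi_uminus)
  also have "\<dots> = psi (b * x) * eigenvalue b"
    by (simp add: sum.inter_restrict[symmetric] eigenvalue_def sum_distrib_left)
  finally show ?thesis .
qed

text \<open>The characters \<open>x \<mapsto> \<psi>(bx)\<close> form an eigenbasis of the adjacency matrix.\<close>

lemma charpoly_ct_adj: "charpoly (ct_adj g) = (\<Prod>b\<in>UNIV. [:- eigenvalue b, 1:])"
proof -
  define M where "M = (\<chi> i j. (if i = j then [:0, 1:] else 0) - [:ct_adj g $ i $ j:])"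
  define P where "P = (\<chi> i j. [:psi (j * i):])"
  define N where "N = (\<chi> i j. if i = j then [:- eigenvalue i, 1:] else 0)"
  have "(M ** P) $ x $ b = (P ** N) $ x $ b" for x b
  proof -
    have "(M ** P) $ x $ b
        = (\<Sum>k\<in>UNIV. ((if x = k then [:0, 1:] else 0) - [:ct_adj g $ x $ k:]) * [:psi (b * k):])"
      by (simp only: M_def P_def matrix_matrix_mult_def vec_lambda_beta)
    also have "\<dots> = (\<Sum>k\<in>UNIV. (if x = k then [:0, psi (b * k):] else 0) - [:ct_adj g $ x $ k * psi (b * k):])"
      by (rule sum.cong[OF refl]) (auto simp: algebra_simps)
    also have "\<dots> = [:psi (b * x):] * [:- eigenvalue b, 1:]"
      by (simp add: sum_subtractf sum_to_poly ct_adj_mult_character)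
    also have "\<dots> = (P ** N) $ x $ b"
      unfolding P_def N_def matrix_matrix_mult_def
      by (simp add: if_distrib[of "\<lambda>t. _ * t"] cong: if_cong)
    finally show ?thesis .
  qed
  then have MP: "M ** P = P ** N" by (simp add: vec_eq_iff)
  have "det P \<noteq> 0" unfolding P_def by (rule det_character_matrix_nonzero)
  moreover have "det M * det P = det P * det N"
    using arg_cong[OF MP, of det] by (simp add: det_mul)
  ultimately have "det M = det N" by (simp add: mult.commute)
  then show ?thesis by (simp add: charpoly_def M_def N_def det_diagonal)
qed

end

text \<open>With \<open>x = a - b\<close> and \<open>y = a + b\<close> we have \<open>x\<^sup>2, y\<^sup>2 = q \<mp> 2ab\<close> and \<open>ab = \<plusminus>\<surd>q\<close>.\<close>

lemma plus_minus_diff_sum_eq: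
  fixes a b q :: real
  assumes sum_sq: "a^2 + b^2 = q" and prod_sq: "(a * b)^2 = q" and q: "q > 4"
  defines "s1 \<equiv> sqrt (q - 2 * sqrt q)" and "s2 \<equiv> sqrt (q + 2 * sqrt q)"
  shows "{b - a, a - b, - (a + b), a + b} = {s1, - s1, s2, - s2}"
    and "distinct [b - a, a - b, - (a + b), a + b]"
proof -
  have sqrt_q: "sqrt q > 2" using q real_sqrt_less_iff[of 4 q] by simp
  then have "q - 2 * sqrt q > 0" using q by (metis diff_gt_0_iff_gt mult_strict_right_mono real_sqrt_pow2 power2_eq_square less_trans zero_less_numeral order.strict_implies_order)
  then have s: "s1 > 0" "s2 > 0" "s1 \<noteq> s2" using sqrt_q by (auto simp: s1_def s2_def)
  have ab: "\<bar>a * b\<bar> = sqrt q" using prod_sq by (metis real_sqrt_abs)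
  have x: "(a - b)^2 = q - 2 * (a * b)" and y: "(a + b)^2 = q + 2 * (a * b)"
    using sum_sq by (simp_all add: power2_eq_square algebra_simps)
  have "(\<bar>a - b\<bar> = s1 \<and> \<bar>a + b\<bar> = s2) \<or> (\<bar>a - b\<bar> = s2 \<and> \<bar>a + b\<bar> = s1)"
  proof (cases "a * b \<ge> 0")
    case True
    then have "a * b = sqrt q" using ab by simp
    then show ?thesis using x y by (simp add: s1_def s2_def flip: real_sqrt_abs)
  next
    case False
    then have "a * b = - sqrt q" using ab by simp
    then show ?thesis using x y by (simp add: s1_def s2_def flip: real_sqrt_abs)
  qed
  then show "{b - a, a - b, - (a + b), a + b} = {s1, - s1, s2, - s2}"
    and "distinct [b - a, a - b, - (a + b), a + b]"
    using s by (auto simp: abs_if split: if_splits)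
qed

context quartic_gauss_sums
begin

lemma jacobi_sum_squares: "jacobi_X^2 + jacobi_Y^2 = int CARD('a)"
proof -
  let ?J = "\<Sum>t\<in>UNIV. jacobi_term t" and ?q = "complex_of_nat CARD('a)"
  have "cnj (gauss * gauss) * (gauss * gauss) = ?q * ?q"
    using norm_gauss by (metis complex_cnj_mult mult.commute mult.left_commute)
  moreover have "cnj (gauss * gauss) * (gauss * gauss) = (cnj ?J * ?J) * ?q"
    using gauss_square norm_gauss_quadratic by (simp add: mult_ac)
  ultimately have "cnj ?J * ?J = ?q" by simp
  moreover have "cnj ?J * ?J = of_int (jacobi_X^2 + jacobi_Y^2)"
    by (simp add: sum_jacobi_term complex_eq_iff power2_eq_square)
  ultimately have "(of_int (jacobi_X^2 + jacobi_Y^2) :: complex) = of_int (int CARD('a))" by simp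
  then show ?thesis by (simp only: of_int_eq_iff)
qed

lemma jacobi_Y_square:
  assumes "odd s" and q: "int CARD('a) = s^2 + 4"
  shows "jacobi_Y^2 = 4"
proof -
  obtain k where k: "CARD('a) = CHAR('a) ^ k" using card_finite_field_CHAR_power by blast
  have "odd CHAR('a)" using CHAR_mod_4 by presburger
  then show ?thesis
    using sum_two_squares_prime_power_imp_square_eq_4[OF prime_CHAR_finite_field _ _ _
        even_jacobi_Y \<open>odd s\<close> not_CHAR_dvd_jacobi_X_Y] jacobi_sum_squares q k
    by simp
qed

text \<open>Comparing imaginary parts in \<open>G\<^sup>2 = J \<cdot> G(\<chi>\<^sup>2)\<close>, where \<open>G(\<chi>\<^sup>2) = \<plusminus>\<surd>q\<close> is real.\<close>

lemma Re_Im_gauss_square: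
  assumes "odd s" "int CARD('a) = s^2 + 4"
  shows "(Re gauss * Im gauss)^2 = real CARD('a)"
proof -
  define r where "r = Re gauss_quadratic"
  have Gr: "gauss_quadratic = complex_of_real r"
    using cnj_gauss_quadratic by (simp add: r_def complex_eq_iff)
  then have "complex_of_real (r^2) = complex_of_real (real CARD('a))"
    using norm_gauss_quadratic cnj_gauss_quadratic by (simp add: power2_eq_square)
  then have r2: "r^2 = real CARD('a)" by (simp only: of_real_eq_iff)
  have "2 * Re gauss * Im gauss = Im (gauss * gauss)" by simp
  also have "\<dots> = real_of_int jacobi_Y * r" by (simp add: gauss_square Gr sum_jacobi_term)
  finally have "(2 * Re gauss * Im gauss)^2 = (real_of_int jacobi_Y)^2 * r^2"
    by (simp add: power_mult_distrib)
  also have "(real_of_int jacobi_Y)^2 = 4" using jacobi_Y_square[OF assms] by (metis of_int_numeral of_int_power)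
  finally show ?thesis using r2 by (simp add: power_mult_distrib)
qed

lemma card_eigenvalue_eq:
  assumes c: "c \<in> {1, \<i>, -1, -\<i>}"
    and distinct: "distinct [gauss_twist_Im 1, gauss_twist_Im (-1), gauss_twist_Im \<i>, gauss_twist_Im (-\<i>)]"
  shows "card {b. eigenvalue b = Complex (-1/2) (gauss_twist_Im c / 2)} = f"
proof -
  have inj: "inj_on gauss_twist_Im {1, \<i>, -1, -\<i>}" using distinct by (auto simp: inj_on_def)
  have "eigenvalue b = Complex (-1/2) (gauss_twist_Im c / 2) \<longleftrightarrow> chi (- b) = c" for b
  proof (cases "b = 0")
    case True
    then show ?thesis using c by (auto simp: eigenvalue_0 complex_eq_iff)
  next
    case False
    then have "eigenvalue b = Complex (-1/2) (gauss_twist_Im c / 2)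
        \<longleftrightarrow> gauss_twist_Im (chi (- b)) = gauss_twist_Im c"
      by (simp add: eigenvalue_nonzero complex_eq_iff)
    also have "\<dots> \<longleftrightarrow> chi (- b) = c"
      using inj_on_eq_iff[OF inj, of "chi (- b)" c] chi_values[of "- b"] c False by simp
    finally show ?thesis .
  qed
  then have "{b. eigenvalue b = Complex (-1/2) (gauss_twist_Im c / 2)} = {b. chi (- b) = c}"
    by blast
  moreover have "bij_betw uminus {b. chi (- b) = c} {x. chi x = c}"
    by (rule bij_betwI[of _ _ _ uminus]) auto
  ultimately show ?thesis using card_chi_eq[OF c] bij_betw_same_card by fastforce
qed

lemma gauss_twist_Im_values:
  fixes s :: int
  assumes "odd s" and "int CARD('a) = s^2 + 4"
  defines "s1 \<equiv> sqrt (real CARD('a) - 2 * sqrt (real CARD('a)))"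
    and "s2 \<equiv> sqrt (real CARD('a) + 2 * sqrt (real CARD('a)))"
  shows "gauss_twist_Im ` {1, -1, \<i>, -\<i>} = {s1, - s1, s2, - s2}"
    and "distinct [gauss_twist_Im 1, gauss_twist_Im (-1), gauss_twist_Im \<i>, gauss_twist_Im (-\<i>)]"
proof -
  have sum_sq: "(Re gauss)^2 + (Im gauss)^2 = real CARD('a)"
    using norm_gauss by (simp add: complex_eq_iff power2_eq_square)
  have q: "real CARD('a) > 4" using card_eq_4f_plus_1 f_pos by simp
  note pm = plus_minus_diff_sum_eq[OF sum_sq Re_Im_gauss_square[OF assms(1,2)] q, folded s1_def s2_def]
  have w: "gauss_twist_Im 1 = Im gauss - Re gauss" "gauss_twist_Im (-1) = Re gauss - Im gauss"
    "gauss_twist_Im \<i> = - (Re gauss + Im gauss)" "gauss_twist_Im (-\<i>) = Re gauss + Im gauss"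
    by (simp_all add: gauss_twist_Im_def algebra_simps)
  have "gauss_twist_Im ` {1, -1, \<i>, -\<i>}
      = {gauss_twist_Im 1, gauss_twist_Im (-1), gauss_twist_Im \<i>, gauss_twist_Im (-\<i>)}"
    by simp
  then show "gauss_twist_Im ` {1, -1, \<i>, -\<i>} = {s1, - s1, s2, - s2}"
    using pm(1) unfolding w by (rule trans)
  show "distinct [gauss_twist_Im 1, gauss_twist_Im (-1), gauss_twist_Im \<i>, gauss_twist_Im (-\<i>)]"
    using pm(2) unfolding w .
qed

lemma eigenvalue_fibers:
  fixes s :: int
  assumes "odd s" and "int CARD('a) = s^2 + 4"
  defines "s1 \<equiv> sqrt (real CARD('a) - 2 * sqrt (real CARD('a)))"
    and "s2 \<equiv> sqrt (real CARD('a) + 2 * sqrt (real CARD('a)))"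
  shows "range eigenvalue = {of_nat (2 * f), Complex (-1/2) (s1 / 2), Complex (-1/2) (- s1 / 2),
      Complex (-1/2) (s2 / 2), Complex (-1/2) (- s2 / 2)}"
    and "card {b. eigenvalue b = of_nat (2 * f)} = 1"
    and "t \<in> {s1, - s1, s2, - s2} \<Longrightarrow> card {b. eigenvalue b = Complex (-1/2) (t / 2)} = f"
proof -
  let ?C = "{1, -1, \<i>, -\<i>}" and ?ev = "\<lambda>t. Complex (-1/2) (t / 2)"
  note twist_values = gauss_twist_Im_values(1)[OF assms(1,2), folded s1_def s2_def]
    and distinct = gauss_twist_Im_values(2)[OF assms(1,2)]
  show fiber: "card {b. eigenvalue b = ?ev t} = f" if "t \<in> {s1, - s1, s2, - s2}" for t
  proof -
    from that have "t \<in> gauss_twist_Im ` ?C" unfolding twist_values .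
    then obtain c where "c \<in> ?C" "t = gauss_twist_Im c" by (rule imageE)
    then show ?thesis using card_eigenvalue_eq[OF _ distinct, of c] by auto
  qed
  have nonzero: "eigenvalue b \<in> ?ev ` {s1, - s1, s2, - s2}" if "b \<noteq> 0" for b
  proof -
    have "chi (- b) \<in> ?C" using chi_values[of "- b"] that by auto
    then have "gauss_twist_Im (chi (- b)) \<in> {s1, - s1, s2, - s2}" unfolding twist_values[symmetric] by (rule imageI)
    then show ?thesis unfolding eigenvalue_nonzero[OF that] by (rule imageI)
  qed
  have "eigenvalue b \<noteq> of_nat (2 * f)" if "b \<noteq> 0" for b
  proof
    assume "eigenvalue b = of_nat (2 * f)"
    then have "Re (eigenvalue b) = real (2 * f)" by simp
    then show False by (simp add: eigenvalue_nonzero[OF that])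
  qed
  then have "{b. eigenvalue b = of_nat (2 * f)} = {0}" using eigenvalue_0 by blast
  then show "card {b. eigenvalue b = of_nat (2 * f)} = 1" by simp
  show "range eigenvalue = {of_nat (2 * f), ?ev s1, ?ev (- s1), ?ev s2, ?ev (- s2)}"
  proof (intro equalityI subsetI)
    fix z assume "z \<in> range eigenvalue"
    then obtain b where "z = eigenvalue b" by blast
    then show "z \<in> {of_nat (2 * f), ?ev s1, ?ev (- s1), ?ev s2, ?ev (- s2)}"
      using nonzero[of b] eigenvalue_0 by (cases "b = 0") auto
  next
    have "?ev t \<in> range eigenvalue" if "t \<in> {s1, - s1, s2, - s2}" for t
    proof -
      have "{b. eigenvalue b = ?ev t} \<noteq> {}" using fiber[OF that] f_pos by (intro notI) simp
      then show ?thesis by (metis (mono_tags) empty_Collect_eq rangeI)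
    qed
    then show "z \<in> range eigenvalue" if "z \<in> {of_nat (2 * f), ?ev s1, ?ev (- s1), ?ev s2, ?ev (- s2)}" for z
      using that eigenvalue_0 by (metis insert_iff rangeI singletonD)
  qed
qed

end

theorem theorem2:
  fixes g :: "'a::{field,finite}" and q :: nat and s :: int
  assumes "CARD('a) = q"
    and "q mod 8 = 5"
    and "odd s" and "int q = s^2 + 4"
    and "\<forall>x::'a. x \<noteq> 0 \<longrightarrow> (\<exists>k::nat. x = g ^ k)"
  defines "l0 \<equiv> complex_of_real ((real q - 1) / 2)"
    and "l1 \<equiv> (-1 + \<i> * complex_of_real (sqrt (real q - 2 * sqrt (real q)))) / 2"
    and "l2 \<equiv> (-1 - \<i> * complex_of_real (sqrt (real q - 2 * sqrt (real q)))) / 2"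
    and "l3 \<equiv> (-1 + \<i> * complex_of_real (sqrt (real q + 2 * sqrt (real q)))) / 2"
    and "l4 \<equiv> (-1 - \<i> * complex_of_real (sqrt (real q + 2 * sqrt (real q)))) / 2"
  shows "{z. poly (charpoly (ct_adj g)) z = 0} = {l0, l1, l2, l3, l4}
    \<and> order l0 (charpoly (ct_adj g)) = 1
    \<and> order l1 (charpoly (ct_adj g)) = (q - 1) div 4
    \<and> order l2 (charpoly (ct_adj g)) = (q - 1) div 4
    \<and> order l3 (charpoly (ct_adj g)) = (q - 1) div 4
    \<and> order l4 (charpoly (ct_adj g)) = (q - 1) div 4"
proof -
  interpret quartic_setting g
    using assms(1,2,5) by unfold_locales simp_all
  obtain psi :: "'a \<Rightarrow> complex" where "additive_character psi"
    using exists_additive_character by blast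
  then interpret quartic_gauss_sums g psi
    by (simp add: quartic_gauss_sums_def quartic_setting_axioms)
  let ?s1 = "sqrt (real q - 2 * sqrt (real q))" and ?s2 = "sqrt (real q + 2 * sqrt (real q))"
  have q: "int CARD('a) = s^2 + 4" using assms(1,4) by simp
  note fibers = eigenvalue_fibers[OF \<open>odd s\<close> q, unfolded assms(1)]
  have "l0 = of_nat (2 * f)" using card_eq_4f_plus_1 assms(1) by (simp add: l0_def)
  moreover have "l1 = Complex (-1/2) (?s1 / 2)" "l2 = Complex (-1/2) (- ?s1 / 2)"
    "l3 = Complex (-1/2) (?s2 / 2)" "l4 = Complex (-1/2) (- ?s2 / 2)"
    by (simp_all add: l1_def l2_def l3_def l4_def complex_eq_iff)
  moreover have "(q - 1) div 4 = f" using assms(1) by (simp add: f_def)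
  ultimately show ?thesis
    unfolding charpoly_ct_adj poly_roots_prod_linear_factors order_prod_linear_factors[OF finite[of UNIV]]
    using fibers(1,2) fibers(3)[of ?s1] fibers(3)[of "- ?s1"] fibers(3)[of ?s2] fibers(3)[of "- ?s2"]
    by simp
qed

end
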